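(* Let $F=\frac1N\sum_{n=1}^N F_n$ on $\mathbb{R}^{d_m\times d_n}$ satisfy the standing assumptions (A1)–(A4) below, and let $\{W^t\}$, $\{B^{t,j}_{k(n),n}\}$, $\{P^t_{k}\}$ be generated by the FedKRSO-SGD iteration described in the context with learning rate $0<\eta\le \frac{r}{16Ld_nJ}$. Then for every round $t\ge 0$, $$\mathbb{E}[F(W^{t+1})]\le \mathbb{E}[F(W^t)]+\frac{2Ld_nJ^2\eta^2}{r}\varsigma^2+\frac{\eta d_n^2L^2}{r^2}Q^t-\frac{3J\eta}{8}\mathbb{E}\big[\|\nabla F(W^t)\|_F^2\big]+\frac{LJ\eta^2d_n^2\sigma^2}{Nr^2},$$ where $Q^t:=\frac1N\sum_{n=1}^N\sum_{j=0}^{J-1}\mathbb{E}\big[\|B^{t,j}_{k(n),n}P^t_{k(n)}\|_F^2\big]$.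
   Context: Setting: $N$ clients; each client $n\in[N]$ has a differentiable local objective $F_n:\mathbb{R}^{d_m\times d_n}\to\mathbb{R}$ and the global objective is $F(W)=\frac1N\sum_{n=1}^N F_n(W)$. $\|\cdot\|_F$ is the Frobenius norm. Fix integers $r\ge1$ (rank), $K\ge1$ (number of seeds), $J\ge1$ (local steps), a learning rate $\eta>0$ and an initial matrix $W^0$. FedKRSO-SGD iteration (one interval per round, plain SGD, no momentum): at each round $t=0,1,2,\dots$, random matrices $P^t_1,\dots,P^t_K\in\mathbb{R}^{r\times d_n}$ are drawn, and each client $n$ independently draws an index $k(n)=k(n,t)$ uniformly from $\{1,\dots,K\}$. Client $n$ sets $B^{t,0}_{k(n),n}=0\in\mathbb{R}^{d_m\times r}$ and, for $j=0,\dots,J-1$, with local model $W^{t,j}_n:=W^t+B^{t,j}_{k(n),n}P^t_{k(n)}$, updates $$B^{t,j+1}_{k(n),n}=B^{t,j}_{k(n),n}-\eta\,\hat\nabla f_n(W^{t,j}_n)\,(P^t_{k(n)})^\top,$$ where $\hat\nabla f_n(W)$ is a stochastic gradient computed on a fresh sample. The next global model is $$W^{t+1}=W^t+\frac1N\sum_{n=1}^N B^{t,J}_{k(n),n}P^t_{k(n)}.$$ Standing assumptions: (A1) ($L$-smoothness) For all $n$ and all $W_1,W_2$: $\|\nabla F_n(W_1)-\nabla F_n(W_2)\|_F\le L\|W_1-W_2\|_F$. (A2) (Stochastic gradients) Conditionally on all past randomness and on the random matrices, $\mathbb{E}[\hat\nabla f_n(W)]=\nabla F_n(W)$ and $\mathbb{E}\|\hat\nabla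 f_n(W)-\nabla F_n(W)\|_F^2\le\sigma^2$ for all $W$; samples are independent across clients and steps. (A3) (Heterogeneity) There is $\varsigma\ge0$ with $\frac1N\sum_{n=1}^N\|\nabla F_n(W)\|_F^2\le\varsigma^2+\|\nabla F(W)\|_F^2$ for all $W$. (A4) (Random matrices) The matrices $\{P^t_k\}_{k\in[K],t}$ are mutually independent, independent of the data sampling and of the index draws, and each satisfies $P^t_k(P^t_k)^\top=\frac{d_n}{r}I_r$ almost surely and $\mathbb{E}[(P^t_k)^\top P^t_k]=I_{d_n}$. *)

theory Defs
  imports "HOL-Probability.Probability"
begin

definition avgF :: "nat \<Rightarrow> (nat \<Rightarrow> 'm \<Rightarrow> real) \<Rightarrow> 'm \<Rightarrow> real" where
  "avgF N Fn W = (\<Sum>n<N. Fn n W) / real N"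

definition avgGrad :: "nat \<Rightarrow> (nat \<Rightarrow> 'm \<Rightarrow> 'm::real_vector) \<Rightarrow> 'm \<Rightarrow> 'm" where
  "avgGrad N G W = (1 / real N) *\<^sub>R (\<Sum>n<N. G n W)"

text \<open>Local SGD steps of client n on the factor B (d_m x r), with fixed base model W,
  fixed random matrix P (r x d_n) and sample sequence xs (sample for step j is xs j).
  The stochastic gradient of client n at W with sample x is g n W x.\<close>
primrec localB ::
  "(nat \<Rightarrow> real^'dn^'dm \<Rightarrow> 'a \<Rightarrow> real^'dn^'dm) \<Rightarrow> real \<Rightarrow> nat \<Rightarrow> real^'dn^'dm
    \<Rightarrow> real^'dn^'r \<Rightarrow> (nat \<Rightarrow> 'a) \<Rightarrow> nat \<Rightarrow> real^'r^'dm" where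
  "localB g eta n W P xs 0 = 0"
| "localB g eta n W P xs (Suc j) =
     localB g eta n W P xs j
     - eta *\<^sub>R (g n (W + localB g eta n W P xs j ** P) (xs j) ** transpose P)"

text \<open>Global FedKRSO-SGD iterate for a fixed realisation: P t k is the k-th random matrix
  of round t, kk t n the index drawn by client n in round t, xi t n j the sample used by
  client n at local step j of round t.\<close>
primrec fedW ::
  "(nat \<Rightarrow> real^'dn^'dm \<Rightarrow> 'a \<Rightarrow> real^'dn^'dm) \<Rightarrow> real \<Rightarrow> nat \<Rightarrow> nat \<Rightarrow> real^'dn^'dm
    \<Rightarrow> (nat \<Rightarrow> nat \<Rightarrow> real^'dn^'r) \<Rightarrow> (nat \<Rightarrow> nat \<Rightarrow> nat) \<Rightarrow> (nat \<Rightarrow> nat \<Rightarrow> nat \<Rightarrow> 'a)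
    \<Rightarrow> nat \<Rightarrow> real^'dn^'dm" where
  "fedW g eta N J W0 P kk xi 0 = W0"
| "fedW g eta N J W0 P kk xi (Suc t) =
     fedW g eta N J W0 P kk xi t
     + (1 / real N) *\<^sub>R (\<Sum>n<N. localB g eta n (fedW g eta N J W0 P kk xi t)
                                   (P t (kk t n)) (xi t n) J ** P t (kk t n))"

definition Wrv where
  "Wrv g eta N J W0 P kk xi t w =
     fedW g eta N J W0 (\<lambda>t k. P t k w) (\<lambda>t n. kk t n w) (\<lambda>t n j. xi t n j w) t"

definition Brv where
  "Brv g eta N J W0 P kk xi t n j w =
     localB g eta n (Wrv g eta N J W0 P kk xi t w) (P t (kk t n w) w) (\<lambda>j. xi t n j w) j"

text \<open>Index set of all elementary random quantities, and the sigma-algebras they generate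
  (used to express mutual independence).\<close>
definition fed_index :: "nat \<Rightarrow> nat \<Rightarrow> nat \<Rightarrow> ((nat \<times> nat) + (nat \<times> nat) + (nat \<times> nat \<times> nat)) set" where
  "fed_index K N J =
     Inl ` {(t, k). k < K} \<union> Inr ` Inl ` {(t, n). n < N}
     \<union> Inr ` Inr ` {(t, n, j). n < N \<and> j < J}"

definition fed_events ::
  "'w measure \<Rightarrow> 'a measure \<Rightarrow> (nat \<Rightarrow> nat \<Rightarrow> 'w \<Rightarrow> real^'dn^'r) \<Rightarrow> (nat \<Rightarrow> nat \<Rightarrow> 'w \<Rightarrow> nat)
    \<Rightarrow> (nat \<Rightarrow> nat \<Rightarrow> nat \<Rightarrow> 'w \<Rightarrow> 'a)
    \<Rightarrow> ((nat \<times> nat) + (nat \<times> nat) + (nat \<times> nat \<times> nat)) \<Rightarrow> 'w set set" where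
  "fed_events M S P kk xi i =
     (case i of
        Inl (t, k) \<Rightarrow> {P t k -` A \<inter> space M | A. A \<in> sets borel}
      | Inr (Inl (t, n)) \<Rightarrow> {kk t n -` A \<inter> space M | A. A \<in> sets (count_space UNIV)}
      | Inr (Inr (t, n, j)) \<Rightarrow> {xi t n j -` A \<inter> space M | A. A \<in> sets S})"

end

theory Submission
  imports Defs
begin

text \<open>
  Let A_n = P^T P for the random matrix drawn by client n.  From P P^T = (d_n/r) I we get
  A_n^2 = (d_n/r) A_n, so right multiplication by A_n is symmetric with norm at most d_n/r,
  and the round increment is W^(t+1) - W^t = -(eta/N) sum_n sum_j g_(n,j) A_n.  Apply the
  descent lemma to F and split each stochastic gradient g_(n,j) into grad F_n(W^t), the drift
  grad F_n(W^(t,j)_n) - grad F_n(W^t), which is at most L |B P|, and a noise term.  As the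
  drawn matrix is independent of W^t and E[P^T P] = I, the projections drop out of the
  first-order term in expectation, giving -J eta E|grad F|^2.  Each noise term has mean zero
  given everything computed before its sample, so it is orthogonal to grad F(W^t) and to all
  other noise terms; this gives the sigma^2/N term.  The drift is absorbed by Young's
  inequality, and the step size condition eta L J d_n/r <= 1/16 collects the constants.
\<close>

section \<open>Integrals and independence\<close>

lemma (in prob_space) indep_sets_prob_Int_rest:
  assumes indep: "indep_sets E I" and a: "a \<in> I"
    and stable: "\<And>i. i \<in> I \<Longrightarrow> Int_stable (E i)"
    and A: "A \<in> sigma_sets (space M) (\<Union>i\<in>I-{a}. E i)" and B: "B \<in> E a"
  shows "prob (A \<inter> B) = prob A * prob B"
proof -
  let ?I = "case_bool (I-{a}) {a}"
  have "indep_sets (\<lambda>j. sigma_sets (space M) (\<Union>i\<in>?I j. E i)) UNIV"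
  proof (rule indep_sets_collect_sigma)
    show "indep_sets E (\<Union>j\<in>UNIV. ?I j)"
      using indep a by (simp add: UNIV_bool insert_absorb)
    show "\<And>i j. j \<in> UNIV \<Longrightarrow> i \<in> ?I j \<Longrightarrow> Int_stable (E i)"
      using stable a by (auto split: bool.splits)
    show "disjoint_family_on ?I UNIV"
      by (auto simp: disjoint_family_on_def split: bool.splits)
  qed
  then have "prob (\<Inter>j\<in>UNIV. case_bool A B j) = (\<Prod>j\<in>UNIV. prob (case_bool A B j))"
    by (rule indep_setsD) (use A B in \<open>auto simp: sigma_sets.Basic split: bool.splits\<close>)
  then show ?thesis by (simp add: UNIV_bool Int_commute)
qed

lemma (in prob_space) indep_sets_distr_pair:
  assumes indep: "indep_sets E I" and a: "a \<in> I"
    and stable: "\<And>i. i \<in> I \<Longrightarrow> Int_stable (E i)"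
    and Z: "Z \<in> measurable (sigma (space M) (\<Union>i\<in>I-{a}. E i)) T"
    and V: "V \<in> measurable M Sa" and V_events: "\<And>A. A \<in> sets Sa \<Longrightarrow> V -` A \<inter> space M \<in> E a"
  shows "Z \<in> measurable M T"
    and "distr M T Z \<Otimes>\<^sub>M distr M Sa V = distr M (T \<Otimes>\<^sub>M Sa) (\<lambda>w. (Z w, V w))"
proof -
  have E_events: "\<And>i. i \<in> I \<Longrightarrow> E i \<subseteq> events" using indep unfolding indep_sets_def by auto
  have gen: "(\<Union>i\<in>I-{a}. E i) \<subseteq> Pow (space M)" using E_events sets.sets_into_space by blast
  have sets_Z: "sets (sigma (space M) (\<Union>i\<in>I-{a}. E i)) = sigma_sets (space M) (\<Union>i\<in>I-{a}. E i)"
    using gen by (rule sets_measure_of)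
  have space_Z: "space (sigma (space M) (\<Union>i\<in>I-{a}. E i)) = space M"
    using gen by (rule space_measure_of)
  have sub: "sigma_sets (space M) (\<Union>i\<in>I-{a}. E i) \<subseteq> events"
    by (rule sets.sigma_sets_subset) (use E_events in auto)
  have Z_vimage: "\<And>A. A \<in> sets T \<Longrightarrow> Z -` A \<inter> space M \<in> sigma_sets (space M) (\<Union>i\<in>I-{a}. E i)"
    using measurable_sets[OF Z] unfolding sets_Z space_Z by simp
  show Z_M: "Z \<in> measurable M T"
  proof (rule measurableI)
    show "\<And>x. x \<in> space M \<Longrightarrow> Z x \<in> space T"
      using measurable_space[OF Z] unfolding space_Z by simp
    show "\<And>A. A \<in> sets T \<Longrightarrow> Z -` A \<inter> space M \<in> sets M"
      using Z_vimage sub by blast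
  qed
  have prob_Int: "prob (Z -` A \<inter> space M \<inter> (V -` B \<inter> space M))
      = prob (Z -` A \<inter> space M) * prob (V -` B \<inter> space M)"
    if "A \<in> sets T" and "B \<in> sets Sa" for A B
    using indep_sets_prob_Int_rest[OF indep a stable] Z_vimage V_events that by blast
  interpret PZ: prob_space "distr M T Z" by (rule prob_space_distr[OF Z_M])
  interpret PV: prob_space "distr M Sa V" by (rule prob_space_distr[OF V])
  show "distr M T Z \<Otimes>\<^sub>M distr M Sa V = distr M (T \<Otimes>\<^sub>M Sa) (\<lambda>w. (Z w, V w))"
  proof (rule pair_measure_eqI)
    show "sigma_finite_measure (distr M T Z)" "sigma_finite_measure (distr M Sa V)"
      by unfold_locales
    show "sets (distr M T Z \<Otimes>\<^sub>M distr M Sa V) = sets (distr M (T \<Otimes>\<^sub>M Sa) (\<lambda>w. (Z w, V w)))"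
      by (simp cong: sets_pair_measure_cong)
  next
    fix A B assume "A \<in> sets (distr M T Z)" and "B \<in> sets (distr M Sa V)"
    then have A: "A \<in> sets T" and B: "B \<in> sets Sa" by auto
    have ZV: "(\<lambda>w. (Z w, V w)) \<in> measurable M (T \<Otimes>\<^sub>M Sa)" using Z_M V by measurable
    have "emeasure (distr M (T \<Otimes>\<^sub>M Sa) (\<lambda>w. (Z w, V w))) (A \<times> B)
        = emeasure M (Z -` A \<inter> space M \<inter> (V -` B \<inter> space M))"
      using A B ZV by (subst emeasure_distr) (auto intro!: arg_cong2[where f=emeasure])
    also have "\<dots> = emeasure (distr M T Z) A * emeasure (distr M Sa V) B"
      using A B Z_M V
      by (simp add: emeasure_distr emeasure_eq_measure prob_Int ennreal_mult measurable_sets)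
    finally show "emeasure (distr M T Z) A * emeasure (distr M Sa V) B
        = emeasure (distr M (T \<Otimes>\<^sub>M Sa) (\<lambda>w. (Z w, V w))) (A \<times> B)" by simp
  qed
qed

lemma (in prob_space) nn_integral_indep_pair:
  assumes Z: "Z \<in> measurable M T" and V: "V \<in> measurable M Sa"
    and indep: "distr M T Z \<Otimes>\<^sub>M distr M Sa V = distr M (T \<Otimes>\<^sub>M Sa) (\<lambda>x. (Z x, V x))"
    and f: "f \<in> borel_measurable (T \<Otimes>\<^sub>M Sa)"
  shows "(\<integral>\<^sup>+w. f (Z w, V w) \<partial>M) = (\<integral>\<^sup>+w. (\<integral>\<^sup>+v. f (Z w, v) \<partial>distr M Sa V) \<partial>M)"
proof -
  interpret PZ: prob_space "distr M T Z" by (rule prob_space_distr[OF Z])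
  interpret PV: prob_space "distr M Sa V" by (rule prob_space_distr[OF V])
  interpret pair_sigma_finite "distr M T Z" "distr M Sa V" ..
  have f': "f \<in> borel_measurable (distr M T Z \<Otimes>\<^sub>M distr M Sa V)"
    using f by (simp cong: measurable_cong_sets)
  have inner_meas: "(\<lambda>z. \<integral>\<^sup>+ v. f (z, v) \<partial>distr M Sa V) \<in> borel_measurable (distr M T Z)"
    using PV.borel_measurable_nn_integral_fst[OF f'] by (simp cong: measurable_cong_sets)
  have "(\<integral>\<^sup>+w. f (Z w, V w) \<partial>M) = (\<integral>\<^sup>+x. f x \<partial>distr M (T \<Otimes>\<^sub>M Sa) (\<lambda>x. (Z x, V x)))"
    using Z V f by (subst nn_integral_distr) auto
  also have "\<dots> = (\<integral>\<^sup>+z. (\<integral>\<^sup>+v. f (z, v) \<partial>distr M Sa V) \<partial>distr M T Z)"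
    unfolding indep[symmetric] by (rule PV.nn_integral_fst[symmetric, OF f'])
  also have "\<dots> = (\<integral>\<^sup>+w. (\<integral>\<^sup>+v. f (Z w, v) \<partial>distr M Sa V) \<partial>M)"
    by (rule nn_integral_distr[OF Z inner_meas])
  finally show ?thesis .
qed

lemma (in prob_space) integral_indep_pair:
  fixes f :: "_ \<Rightarrow> 'b::{banach, second_countable_topology}"
  assumes Z: "Z \<in> measurable M T" and V: "V \<in> measurable M Sa"
    and indep: "distr M T Z \<Otimes>\<^sub>M distr M Sa V = distr M (T \<Otimes>\<^sub>M Sa) (\<lambda>x. (Z x, V x))"
    and f: "f \<in> borel_measurable (T \<Otimes>\<^sub>M Sa)"
    and int: "integrable M (\<lambda>w. f (Z w, V w))"
  shows "(\<integral>w. f (Z w, V w) \<partial>M) = (\<integral>w. (\<integral>v. f (Z w, v) \<partial>distr M Sa V) \<partial>M)"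
proof -
  interpret PZ: prob_space "distr M T Z" by (rule prob_space_distr[OF Z])
  interpret PV: prob_space "distr M Sa V" by (rule prob_space_distr[OF V])
  interpret pair_sigma_finite "distr M T Z" "distr M Sa V" ..
  have f': "f \<in> borel_measurable (distr M T Z \<Otimes>\<^sub>M distr M Sa V)"
    using f by (simp cong: measurable_cong_sets)
  have ZV: "(\<lambda>x. (Z x, V x)) \<in> measurable M (T \<Otimes>\<^sub>M Sa)" using Z V by auto
  have int_prod: "integrable (distr M T Z \<Otimes>\<^sub>M distr M Sa V) f"
    unfolding indep using int f ZV by (subst integrable_distr_eq) auto
  have inner_meas: "(\<lambda>z. \<integral> v. f (z, v) \<partial>distr M Sa V) \<in> borel_measurable T"
    using PV.borel_measurable_lebesgue_integral[of "\<lambda>z v. f (z, v)" "distr M T Z"] f'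
    by (simp cong: measurable_cong_sets)
  have "(\<integral>w. f (Z w, V w) \<partial>M) = (\<integral>x. f x \<partial>distr M (T \<Otimes>\<^sub>M Sa) (\<lambda>x. (Z x, V x)))"
    using ZV f by (subst integral_distr) auto
  also have "\<dots> = (\<integral>z. (\<integral>v. f (z, v) \<partial>distr M Sa V) \<partial>distr M T Z)"
    unfolding indep[symmetric] by (rule integral_fst'[symmetric, OF int_prod])
  also have "\<dots> = (\<integral>w. (\<integral>v. f (Z w, v) \<partial>distr M Sa V) \<partial>M)"
    by (rule integral_distr[OF Z inner_meas])
  finally show ?thesis .
qed

lemma Int_stable_vimage: "Int_stable {f -` A \<inter> X | A. A \<in> sets Q}"
  unfolding Int_stable_def
proof safe
  fix A B assume "A \<in> sets Q" "B \<in> sets Q"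
  then show "\<exists>C. (f -` A \<inter> X) \<inter> (f -` B \<inter> X) = f -` C \<inter> X \<and> C \<in> sets Q"
    by (intro exI[of _ "A \<inter> B"]) auto
qed

lemma integrable_inner:
  fixes X Y :: "'x \<Rightarrow> 'v::{real_inner, banach, second_countable_topology}"
  assumes "X \<in> borel_measurable M" and "Y \<in> borel_measurable M"
    and "integrable M (\<lambda>w. (norm (X w))\<^sup>2)" and "integrable M (\<lambda>w. (norm (Y w))\<^sup>2)"
  shows "integrable M (\<lambda>w. inner (X w) (Y w))"
proof (rule Bochner_Integration.integrable_bound)
  show "integrable M (\<lambda>w. (norm (X w))\<^sup>2 + (norm (Y w))\<^sup>2)" using assms by simp
  show "(\<lambda>w. inner (X w) (Y w)) \<in> borel_measurable M" using assms by measurable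
  have "\<bar>inner (X w) (Y w)\<bar> \<le> (norm (X w))\<^sup>2 + (norm (Y w))\<^sup>2" for w
    using Cauchy_Schwarz_ineq2[of "X w" "Y w"] zero_le_power2[of "norm (X w) - norm (Y w)"]
      mult_nonneg_nonneg[OF norm_ge_zero norm_ge_zero, of "X w" "Y w"]
    unfolding power2_diff by linarith
  then show "AE w in M. norm (inner (X w) (Y w)) \<le> norm ((norm (X w))\<^sup>2 + (norm (Y w))\<^sup>2)"
    by simp
qed

lemma integrable_norm_sq_bound:
  fixes X Y :: "'x \<Rightarrow> 'v::real_normed_vector"
  assumes "Y \<in> borel_measurable M" and "integrable M (\<lambda>w. (norm (X w))\<^sup>2)"
    and bound: "AE w in M. norm (Y w) \<le> c * norm (X w)"
  shows "integrable M (\<lambda>w. (norm (Y w))\<^sup>2)"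
proof (rule Bochner_Integration.integrable_bound)
  show "integrable M (\<lambda>w. c\<^sup>2 * (norm (X w))\<^sup>2)" using assms by simp
  show "(\<lambda>w. (norm (Y w))\<^sup>2) \<in> borel_measurable M" using assms by measurable
  show "AE w in M. norm ((norm (Y w))\<^sup>2) \<le> norm (c\<^sup>2 * (norm (X w))\<^sup>2)"
    using bound
  proof eventually_elim
    case (elim w)
    from power_mono[OF elim norm_ge_zero, of 2] show ?case by (simp add: power_mult_distrib)
  qed
qed

lemma integral_double_sum:
  fixes f :: "nat \<Rightarrow> nat \<Rightarrow> 'x \<Rightarrow> real"
  assumes "\<And>n j. n < N \<Longrightarrow> j < J \<Longrightarrow> integrable M (f n j)"
  shows "(\<integral>w. (\<Sum>n<N. \<Sum>j<J. f n j w) \<partial>M) = (\<Sum>n<N. \<Sum>j<J. (\<integral>w. f n j w \<partial>M))"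
proof -
  have "(\<integral>w. (\<Sum>n<N. \<Sum>j<J. f n j w) \<partial>M) = (\<Sum>n<N. (\<integral>w. (\<Sum>j<J. f n j w) \<partial>M))"
    by (rule Bochner_Integration.integral_sum) (use assms in auto)
  also have "\<dots> = (\<Sum>n<N. \<Sum>j<J. (\<integral>w. f n j w \<partial>M))"
    by (intro sum.cong refl Bochner_Integration.integral_sum) (use assms in auto)
  finally show ?thesis .
qed

section \<open>Matrices\<close>

lemma borel_measurable_matrix_mult[measurable]:
  fixes f :: "'x \<Rightarrow> real^'n^'m" and g :: "'x \<Rightarrow> real^'k^'n"
  assumes [measurable]: "f \<in> borel_measurable M" "g \<in> borel_measurable M"
  shows "(\<lambda>x. f x ** g x) \<in> borel_measurable M"
proof -
  have "continuous_on UNIV (\<lambda>p::(real^'n^'m) \<times> (real^'k^'n). fst p ** snd p)"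
    unfolding matrix_matrix_mult_def
    by (intro continuous_intros continuous_on_vec_lambda continuous_on_sum)
  then have mult: "(\<lambda>p::(real^'n^'m) \<times> (real^'k^'n). fst p ** snd p) \<in> borel_measurable borel"
    by (rule borel_measurable_continuous_onI)
  have "(\<lambda>x. (f x, g x)) \<in> borel_measurable M"
    unfolding borel_prod[symmetric] by measurable
  from measurable_compose[OF this mult] show ?thesis by simp
qed

lemma borel_measurable_transpose[measurable]:
  fixes f :: "'x \<Rightarrow> real^'n^'m"
  assumes "f \<in> borel_measurable M"
  shows "(\<lambda>x. transpose (f x)) \<in> borel_measurable M"
proof -
  have "continuous_on UNIV (\<lambda>A::real^'n^'m. transpose A)"
    unfolding transpose_def by (intro continuous_intros continuous_on_vec_lambda)
  from measurable_compose[OF assms borel_measurable_continuous_onI[OF this]] show ?thesis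
    by simp
qed

lemma inner_matrix_mult_right:
  fixes X :: "real^'n^'m" and Y :: "real^'k^'m" and B :: "real^'n^'k"
  shows "inner X (Y ** B) = inner (X ** transpose B) Y"
proof -
  have "inner X (Y ** B) = (\<Sum>i\<in>UNIV. \<Sum>j\<in>UNIV. \<Sum>l\<in>UNIV. X$i$j * (Y$i$l * B$l$j))"
    by (simp add: inner_vec_def matrix_matrix_mult_def sum_distrib_left)
  also have "\<dots> = (\<Sum>i\<in>UNIV. \<Sum>l\<in>UNIV. \<Sum>j\<in>UNIV. X$i$j * (Y$i$l * B$l$j))"
    by (rule sum.cong[OF refl], rule sum.swap)
  also have "\<dots> = inner (X ** transpose B) Y"
    by (simp add: inner_vec_def matrix_matrix_mult_def transpose_def sum_distrib_left mult_ac)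
  finally show ?thesis .
qed

lemma matrix_add_rdistrib: "(X + Y) ** (A :: real^'k^'n) = X ** A + Y ** A"
  by (simp add: matrix_matrix_mult_def vec_eq_iff sum.distrib distrib_right)

lemma matrix_diff_rdistrib: "(X - Y) ** (A :: real^'k^'n) = X ** A - Y ** A"
  by (simp add: matrix_matrix_mult_def vec_eq_iff sum_subtractf left_diff_distrib)

lemma matrix_mult_scaleR_left: "(a *\<^sub>R X) ** (A :: real^'k^'n) = a *\<^sub>R (X ** A)"
  by (simp add: matrix_matrix_mult_def vec_eq_iff sum_distrib_left mult.assoc)

lemma matrix_mult_scaleR_right: "X ** (a *\<^sub>R A) = a *\<^sub>R (X ** (A :: real^'k^'n))"
  by (simp add: matrix_matrix_mult_def vec_eq_iff sum_distrib_left mult_ac)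

lemma transpose_mult_self_square:
  fixes P :: "real^'n^'r"
  assumes "P ** transpose P = c *\<^sub>R mat 1"
  shows "(transpose P ** P) ** (transpose P ** P) = c *\<^sub>R (transpose P ** P)"
proof -
  have "(transpose P ** P) ** (transpose P ** P) = transpose P ** (P ** transpose P) ** P"
    by (simp add: matrix_mul_assoc)
  also have "\<dots> = transpose P ** (c *\<^sub>R mat 1) ** P" by (simp add: assms)
  also have "\<dots> = c *\<^sub>R (transpose P ** P)"
    by (simp add: matrix_scaleR_vector_ac scalar_matrix_assoc matrix_scalar_ac)
  finally show ?thesis .
qed

lemma bounded_linear_inner_matrix_mult:
  fixes x :: "real^'n^'m" and y :: "real^'k^'m"
  shows "bounded_linear (\<lambda>Q::real^'n^'k. b * inner x (y ** Q))"
proof -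
  have "linear (\<lambda>Q::real^'n^'k. b * inner x (y ** Q))"
    by (rule linearI) (simp_all add: matrix_add_ldistrib matrix_mult_scaleR_right inner_add_right algebra_simps)
  then show ?thesis by (simp add: linear_conv_bounded_linear)
qed

lemma norm_mult_proj_sq:
  fixes X :: "real^'n^'m" and A :: "real^'n^'n"
  assumes proj: "A ** A = c *\<^sub>R A" and sym: "transpose A = A"
  shows "(norm (X ** A))\<^sup>2 = c * inner X (X ** A)"
proof -
  have "(norm (X ** A))\<^sup>2 = inner ((X ** A) ** transpose A) X"
    by (simp add: power2_norm_eq_inner inner_matrix_mult_right)
  also have "\<dots> = inner (c *\<^sub>R (X ** A)) X"
    by (simp add: sym proj matrix_mul_assoc[symmetric] matrix_mult_scaleR_right)
  finally show ?thesis by (simp add: inner_commute)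
qed

lemma norm_mult_proj_le:
  fixes X :: "real^'n^'m" and A :: "real^'n^'n"
  assumes proj: "A ** A = c *\<^sub>R A" and sym: "transpose A = A" and c: "c \<ge> 0"
  shows "norm (X ** A) \<le> c * norm X"
proof (cases "norm (X ** A) = 0")
  case True then show ?thesis using c by simp
next
  case False
  have "(norm (X ** A))\<^sup>2 = c * inner X (X ** A)" by (rule norm_mult_proj_sq[OF proj sym])
  also have "\<dots> \<le> c * (norm X * norm (X ** A))"
    by (rule mult_left_mono[OF _ c]) (metis Cauchy_Schwarz_ineq2 abs_le_D1)
  finally have "norm (X ** A) * norm (X ** A) \<le> (c * norm X) * norm (X ** A)"
    by (simp add: power2_eq_square mult_ac)
  then show ?thesis using False by (simp add: mult_le_cancel_right)
qed

lemma proj_diag_le: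
  fixes A :: "real^'n^'n"
  assumes proj: "A ** A = c *\<^sub>R A" and sym: "transpose A = A" and c: "c \<ge> 0"
  shows "A $ i $ i \<le> c"
proof (cases "A $ i $ i \<le> 0")
  case True then show ?thesis using c by linarith
next
  case False
  have "(A $ i $ i)\<^sup>2 \<le> (\<Sum>l\<in>UNIV. (A $ i $ l)\<^sup>2)"
    by (rule member_le_sum[of i UNIV "\<lambda>l. (A $ i $ l)\<^sup>2"]) auto
  also have "\<dots> = (A ** A) $ i $ i"
    using arg_cong[OF sym, of "\<lambda>X. X $ l $ i" for l]
    by (simp add: matrix_matrix_mult_def transpose_def power2_eq_square)
  finally have "A $ i $ i * A $ i $ i \<le> c * A $ i $ i"
    using proj by (simp add: power2_eq_square)
  then show ?thesis using False by (simp add: mult_le_cancel_right)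
qed

section \<open>Deterministic estimates\<close>

lemma norm_sum_sq_le:
  fixes x :: "'i \<Rightarrow> 'v::real_normed_vector"
  assumes "finite I"
  shows "(norm (\<Sum>i\<in>I. x i))\<^sup>2 \<le> real (card I) * (\<Sum>i\<in>I. (norm (x i))\<^sup>2)"
proof -
  have "(norm (\<Sum>i\<in>I. x i))\<^sup>2 \<le> (\<Sum>i\<in>I. norm (x i))\<^sup>2"
    by (rule power_mono[OF norm_sum norm_ge_zero])
  also have "\<dots> \<le> (\<Sum>i\<in>I. (norm (x i))\<^sup>2) * real (card I)"
    by (rule sum_squared_le_sum_of_squares)
  finally show ?thesis by (simp add: mult.commute)
qed

lemma norm_avg_sq_le:
  fixes x :: "nat \<Rightarrow> 'v::real_normed_vector"
  assumes N: "N \<ge> 1"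
  shows "(norm ((1 / real N) *\<^sub>R (\<Sum>n<N. x n)))\<^sup>2 \<le> (1 / real N) * (\<Sum>n<N. (norm (x n))\<^sup>2)"
proof -
  have "(norm ((1 / real N) *\<^sub>R (\<Sum>n<N. x n)))\<^sup>2 = (1 / real N)\<^sup>2 * (norm (\<Sum>n<N. x n))\<^sup>2"
    by (simp add: power_divide)
  also have "\<dots> \<le> (1 / real N)\<^sup>2 * (real N * (\<Sum>n<N. (norm (x n))\<^sup>2))"
    using norm_sum_sq_le[of "{..<N}" x] by (intro mult_left_mono) auto
  also have "\<dots> = (1 / real N) * (\<Sum>n<N. (norm (x n))\<^sup>2)"
    using N by (simp add: power2_eq_square field_simps)
  finally show ?thesis .
qed

lemma norm_add_sq_le:
  fixes x y :: "'v::real_normed_vector"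
  shows "(norm (x + y))\<^sup>2 \<le> 2 * (norm x)\<^sup>2 + 2 * (norm y)\<^sup>2"
proof -
  have "(norm (x + y))\<^sup>2 \<le> (norm x + norm y)\<^sup>2"
    by (rule power_mono[OF norm_triangle_ineq norm_ge_zero])
  also have "\<dots> \<le> 2 * (norm x)\<^sup>2 + 2 * (norm y)\<^sup>2"
    using zero_le_power2[of "norm x - norm y"] unfolding power2_sum power2_diff by linarith
  finally show ?thesis .
qed

lemma mult_le_young:
  fixes a b c :: real
  assumes c: "c > 0"
  shows "a * b \<le> a\<^sup>2 / (2 * c) + c * b\<^sup>2 / 2"
proof -
  have "2 * c * (a * b) \<le> a\<^sup>2 + c\<^sup>2 * b\<^sup>2"
    using zero_le_power2[of "a - c * b"] by (simp add: power2_eq_square algebra_simps)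
  then show ?thesis using c by (simp add: field_simps power2_eq_square)
qed

lemma descent_lemma:
  fixes f :: "'v::real_inner \<Rightarrow> real" and gr :: "'v \<Rightarrow> 'v"
  assumes deriv: "\<And>W. (f has_derivative (\<lambda>H. gr W \<bullet> H)) (at W)"
    and lip: "\<And>W1 W2. norm (gr W1 - gr W2) \<le> L * norm (W1 - W2)"
  shows "f (x + d) \<le> f x + inner (gr x) d + L / 2 * (norm d)\<^sup>2"
proof -
  define \<psi> where "\<psi> s = f (x + s *\<^sub>R d) - s * inner (gr x) d - L / 2 * s\<^sup>2 * (norm d)\<^sup>2" for s
  have f_line: "((\<lambda>s. f (x + s *\<^sub>R d)) has_real_derivative inner (gr (x + s *\<^sub>R d)) d) (at s)" for s
  proof -
    have "((\<lambda>s. x + s *\<^sub>R d) has_derivative (\<lambda>h. h *\<^sub>R d)) (at s)"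
      by (auto intro!: derivative_eq_intros)
    from has_derivative_compose[OF this deriv]
    have "((\<lambda>s. f (x + s *\<^sub>R d)) has_derivative (\<lambda>h. gr (x + s *\<^sub>R d) \<bullet> (h *\<^sub>R d))) (at s)"
      by simp
    moreover have "(\<lambda>h. gr (x + s *\<^sub>R d) \<bullet> (h *\<^sub>R d)) = (*) (inner (gr (x + s *\<^sub>R d)) d)"
      by (auto simp: fun_eq_iff mult.commute)
    ultimately show ?thesis unfolding has_field_derivative_def by simp
  qed
  have \<psi>_deriv: "(\<psi> has_real_derivative
      (inner (gr (x + s *\<^sub>R d)) d - inner (gr x) d - L * s * (norm d)\<^sup>2)) (at s)" for s
    unfolding \<psi>_def[abs_def]
    by (rule DERIV_diff[OF DERIV_diff[OF f_line]]) (auto intro!: derivative_eq_intros simp: power2_eq_square)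
  have \<psi>_deriv_nonpos: "inner (gr (x + s *\<^sub>R d)) d - inner (gr x) d - L * s * (norm d)\<^sup>2 \<le> 0"
    if s: "0 \<le> s" for s
  proof -
    have "inner (gr (x + s *\<^sub>R d)) d - inner (gr x) d = inner (gr (x + s *\<^sub>R d) - gr x) d"
      by (simp add: inner_diff_left)
    also have "\<dots> \<le> norm (gr (x + s *\<^sub>R d) - gr x) * norm d" by (rule norm_cauchy_schwarz)
    also have "\<dots> \<le> (L * norm (s *\<^sub>R d)) * norm d"
      using lip[of "x + s *\<^sub>R d" x] by (intro mult_right_mono) auto
    also have "\<dots> = L * s * (norm d)\<^sup>2" using s by (simp add: power2_eq_square)
    finally show ?thesis by simp
  qed
  have "\<psi> 1 \<le> \<psi> 0"
  proof (rule DERIV_nonpos_imp_nonincreasing[of 0 1 \<psi>])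
    fix s :: real assume "0 \<le> s"
    then show "\<exists>y. DERIV \<psi> s :> y \<and> y \<le> 0" using \<psi>_deriv[of s] \<psi>_deriv_nonpos[of s] by blast
  qed simp
  then show ?thesis unfolding \<psi>_def by simp
qed

context
  fixes N :: nat and c :: real and A :: "nat \<Rightarrow> real^'n^'n"
  assumes N: "N \<ge> 1" and c: "c > 0"
    and proj: "\<And>n. n < N \<Longrightarrow> A n ** A n = c *\<^sub>R A n"
    and sym: "\<And>n. n < N \<Longrightarrow> transpose (A n) = A n"
begin

lemma neg_inner_avg_drift_le:
  fixes G :: "real^'n^'m" and Y U :: "nat \<Rightarrow> nat \<Rightarrow> real^'n^'m"
  assumes Y: "\<And>n j. n < N \<Longrightarrow> j < J \<Longrightarrow> norm (Y n j) \<le> L * norm (U n j)"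
  shows "- inner G ((1 / real N) *\<^sub>R (\<Sum>n<N. \<Sum>j<J. Y n j ** A n))
    \<le> real J / 2 * ((1 / real N) * (\<Sum>n<N. inner G (G ** A n)))
      + c * L\<^sup>2 / 2 * ((1 / real N) * (\<Sum>n<N. \<Sum>j<J. (norm (U n j))\<^sup>2))"
proof -
  have term_le: "- inner G (Y n j ** A n) \<le> inner G (G ** A n) / 2 + c * L\<^sup>2 * (norm (U n j))\<^sup>2 / 2"
    if n: "n < N" and j: "j < J" for n j
  proof -
    have "- inner G (Y n j ** A n) \<le> norm (G ** A n) * norm (Y n j)"
      using Cauchy_Schwarz_ineq2[of "G ** A n" "Y n j"]
      by (simp add: inner_matrix_mult_right sym[OF n])
    also have "\<dots> \<le> (norm (G ** A n))\<^sup>2 / (2 * c) + c * (norm (Y n j))\<^sup>2 / 2"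
      by (rule mult_le_young[OF c])
    also have "(norm (G ** A n))\<^sup>2 / (2 * c) = inner G (G ** A n) / 2"
      using norm_mult_proj_sq[OF proj[OF n] sym[OF n], of G] c by simp
    also have "(norm (Y n j))\<^sup>2 \<le> L\<^sup>2 * (norm (U n j))\<^sup>2"
      using power_mono[OF Y[OF n j] norm_ge_zero, of 2] by (simp add: power_mult_distrib)
    finally show ?thesis using c by (simp add: mult.assoc)
  qed
  have "- inner G ((1 / real N) *\<^sub>R (\<Sum>n<N. \<Sum>j<J. Y n j ** A n))
      = (1 / real N) * (\<Sum>n<N. \<Sum>j<J. - inner G (Y n j ** A n))"
    by (simp add: inner_sum_right sum_negf)
  also have "\<dots> \<le> (1 / real N) * (\<Sum>n<N. \<Sum>j<J. inner G (G ** A n) / 2 + c * L\<^sup>2 * (norm (U n j))\<^sup>2 / 2)"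
    by (intro mult_left_mono sum_mono term_le) auto
  also have "\<dots> = real J / 2 * ((1 / real N) * (\<Sum>n<N. inner G (G ** A n)))
      + c * L\<^sup>2 / 2 * ((1 / real N) * (\<Sum>n<N. \<Sum>j<J. (norm (U n j))\<^sup>2))"
    by (simp add: sum.distrib sum_distrib_left sum_divide_distrib algebra_simps)
  finally show ?thesis .
qed

lemma norm_avg_drift_sq_le:
  fixes Y U :: "nat \<Rightarrow> nat \<Rightarrow> real^'n^'m"
  assumes Y: "\<And>n j. n < N \<Longrightarrow> j < J \<Longrightarrow> norm (Y n j) \<le> L * norm (U n j)"
  shows "(norm ((1 / real N) *\<^sub>R (\<Sum>n<N. \<Sum>j<J. Y n j ** A n)))\<^sup>2
    \<le> real J * c\<^sup>2 * L\<^sup>2 * ((1 / real N) * (\<Sum>n<N. \<Sum>j<J. (norm (U n j))\<^sup>2))"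
proof -
  have term_le: "(norm (Y n j ** A n))\<^sup>2 \<le> c\<^sup>2 * L\<^sup>2 * (norm (U n j))\<^sup>2" if n: "n < N" and j: "j < J" for n j
  proof -
    have "norm (Y n j ** A n) \<le> c * (L * norm (U n j))"
      using norm_mult_proj_le[OF proj[OF n] sym[OF n], of "Y n j"] Y[OF n j] c
      by (meson less_imp_le mult_left_mono order_trans)
    from power_mono[OF this norm_ge_zero, of 2] show ?thesis by (simp add: power_mult_distrib)
  qed
  have "(norm ((1 / real N) *\<^sub>R (\<Sum>n<N. \<Sum>j<J. Y n j ** A n)))\<^sup>2
      \<le> (1 / real N) * (\<Sum>n<N. (norm (\<Sum>j<J. Y n j ** A n))\<^sup>2)"
    by (rule norm_avg_sq_le[OF N])
  also have "\<dots> \<le> (1 / real N) * (\<Sum>n<N. real J * (\<Sum>j<J. (norm (Y n j ** A n))\<^sup>2))"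
    using norm_sum_sq_le[of "{..<J}"] by (intro mult_left_mono sum_mono) auto
  also have "\<dots> \<le> (1 / real N) * (\<Sum>n<N. real J * (\<Sum>j<J. c\<^sup>2 * L\<^sup>2 * (norm (U n j))\<^sup>2))"
    by (intro mult_left_mono sum_mono term_le) auto
  also have "\<dots> = real J * c\<^sup>2 * L\<^sup>2 * ((1 / real N) * (\<Sum>n<N. \<Sum>j<J. (norm (U n j))\<^sup>2))"
    by (simp add: sum_distrib_left[symmetric] mult_ac)
  finally show ?thesis .
qed

lemma norm_avg_mean_sq_le:
  fixes gr :: "nat \<Rightarrow> real^'n^'m"
  shows "(norm ((1 / real N) *\<^sub>R (\<Sum>n<N. \<Sum>j<J. gr n ** A n)))\<^sup>2
    \<le> (real J)\<^sup>2 * c * ((1 / real N) * (\<Sum>n<N. inner (gr n) (gr n ** A n)))"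
proof -
  have "(1 / real N) *\<^sub>R (\<Sum>n<N. \<Sum>j<J. gr n ** A n)
      = real J *\<^sub>R ((1 / real N) *\<^sub>R (\<Sum>n<N. gr n ** A n))"
    by (simp add: scaleR_sum_right sum_constant_scaleR del: sum_constant)
  then have "(norm ((1 / real N) *\<^sub>R (\<Sum>n<N. \<Sum>j<J. gr n ** A n)))\<^sup>2
      = (real J)\<^sup>2 * (norm ((1 / real N) *\<^sub>R (\<Sum>n<N. gr n ** A n)))\<^sup>2"
    by (simp only: norm_scaleR power_mult_distrib power2_abs)
  also have "\<dots> \<le> (real J)\<^sup>2 * ((1 / real N) * (\<Sum>n<N. (norm (gr n ** A n))\<^sup>2))"
    by (intro mult_left_mono norm_avg_sq_le N) simp
  also have "(\<Sum>n<N. (norm (gr n ** A n))\<^sup>2) = (\<Sum>n<N. c * inner (gr n) (gr n ** A n))"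
    by (rule sum.cong[OF refl]) (simp add: norm_mult_proj_sq[OF proj sym])
  finally show ?thesis by (simp add: sum_distrib_left[symmetric] mult_ac)
qed

lemma round_increment_bound:
  fixes G E D :: "real^'n^'m" and gr :: "nat \<Rightarrow> real^'n^'m" and gl e U :: "nat \<Rightarrow> nat \<Rightarrow> real^'n^'m"
  assumes eta: "eta > 0" and L: "L \<ge> 0"
    and lip: "\<And>n j. n < N \<Longrightarrow> j < J \<Longrightarrow> norm (gl n j - gr n) \<le> L * norm (U n j)"
    and E: "E = (1 / real N) *\<^sub>R (\<Sum>n<N. \<Sum>j<J. e n j ** A n)"
    and D: "D = (- eta / real N) *\<^sub>R (\<Sum>n<N. \<Sum>j<J. (gl n j + e n j) ** A n)"
  shows "inner G D + L / 2 * (norm D)\<^sup>2 \<le>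
      - eta * real J * ((1 / real N) * (\<Sum>n<N. inner G (gr n ** A n)))
      + eta * real J / 2 * ((1 / real N) * (\<Sum>n<N. inner G (G ** A n)))
      + (eta * c * L\<^sup>2 / 2 + 2 * L^3 * eta\<^sup>2 * real J * c\<^sup>2)
          * ((1 / real N) * (\<Sum>n<N. \<Sum>j<J. (norm (U n j))\<^sup>2))
      - eta * inner G E
      + 2 * L * eta\<^sup>2 * (real J)\<^sup>2 * c * ((1 / real N) * (\<Sum>n<N. inner (gr n) (gr n ** A n)))
      + L * eta\<^sup>2 * (norm E)\<^sup>2"
proof -
  define D1 where "D1 = (1 / real N) *\<^sub>R (\<Sum>n<N. \<Sum>j<J. gr n ** A n)"
  define D2 where "D2 = (1 / real N) *\<^sub>R (\<Sum>n<N. \<Sum>j<J. (gl n j - gr n) ** A n)"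
  define mean_term where "mean_term = (1 / real N) * (\<Sum>n<N. inner G (gr n ** A n))"
  define G_term where "G_term = (1 / real N) * (\<Sum>n<N. inner G (G ** A n))"
  define drift where "drift = (1 / real N) * (\<Sum>n<N. \<Sum>j<J. (norm (U n j))\<^sup>2)"
  define gr_term where "gr_term = (1 / real N) * (\<Sum>n<N. inner (gr n) (gr n ** A n))"
  have "(gl n j + e n j) ** A n = gr n ** A n + (gl n j - gr n) ** A n + e n j ** A n" for n j
    by (simp add: matrix_add_rdistrib matrix_diff_rdistrib)
  then have D_split: "D = - eta *\<^sub>R (D1 + D2 + E)"
    unfolding D D1_def D2_def E by (simp add: sum.distrib scaleR_add_right)
  have "inner G D1 = real J * ((1 / real N) * (\<Sum>n<N. inner G (gr n ** A n)))"
    unfolding D1_def by (simp add: inner_sum_right sum_constant_scaleR sum_distrib_left del: sum_constant)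
  then have inner_D: "inner G D = - eta * real J * ((1 / real N) * (\<Sum>n<N. inner G (gr n ** A n)))
      - eta * inner G D2 - eta * inner G E"
    unfolding D_split by (simp add: inner_add_right algebra_simps)
  have "(norm D)\<^sup>2 = eta\<^sup>2 * (norm (D1 + D2 + E))\<^sup>2"
    unfolding D_split using eta by (simp add: power_mult_distrib)
  also have "\<dots> \<le> eta\<^sup>2 * (4 * (norm D1)\<^sup>2 + 4 * (norm D2)\<^sup>2 + 2 * (norm E)\<^sup>2)"
    using norm_add_sq_le[of "D1 + D2" E] norm_add_sq_le[of D1 D2] by (intro mult_left_mono) auto
  finally have norm_D: "L / 2 * (norm D)\<^sup>2 \<le> L / 2 * (eta\<^sup>2 * (4 * (norm D1)\<^sup>2 + 4 * (norm D2)\<^sup>2 + 2 * (norm E)\<^sup>2))"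
    using L by (intro mult_left_mono) auto
  have "L * eta\<^sup>2 * (norm D1)\<^sup>2
      \<le> L * eta\<^sup>2 * ((real J)\<^sup>2 * c * ((1 / real N) * (\<Sum>n<N. inner (gr n) (gr n ** A n))))"
    unfolding D1_def using L by (intro mult_left_mono norm_avg_mean_sq_le) auto
  moreover have "L * eta\<^sup>2 * (norm D2)\<^sup>2
      \<le> L * eta\<^sup>2 * (real J * c\<^sup>2 * L\<^sup>2 * ((1 / real N) * (\<Sum>n<N. \<Sum>j<J. (norm (U n j))\<^sup>2)))"
    unfolding D2_def using L lip by (intro mult_left_mono norm_avg_drift_sq_le) auto
  moreover have "eta * (- inner G D2) \<le> eta * (real J / 2 * ((1 / real N) * (\<Sum>n<N. inner G (G ** A n)))
      + c * L\<^sup>2 / 2 * ((1 / real N) * (\<Sum>n<N. \<Sum>j<J. (norm (U n j))\<^sup>2)))"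
    unfolding D2_def using eta lip by (intro mult_left_mono neg_inner_avg_drift_le) auto
  ultimately show ?thesis
    using norm_D unfolding inner_D mean_term_def[symmetric] G_term_def[symmetric] drift_def[symmetric] gr_term_def[symmetric]
    by (simp add: algebra_simps power2_eq_square power3_eq_cube)
qed

end

lemma descent_constants_le:
  fixes F0 F1 EG E4 E5 Q c L eta J vsig sigma N :: real
  assumes descent: "F1 \<le> F0 - eta * J * EG + eta * J / 2 * EG
        + (eta * c * L\<^sup>2 / 2 + 2 * L^3 * eta\<^sup>2 * J * c\<^sup>2) * Q
        + 2 * L * eta\<^sup>2 * J\<^sup>2 * c * E4 + L * eta\<^sup>2 * E5"
    and E4: "E4 \<le> vsig\<^sup>2 + EG" and E5: "E5 \<le> J * c\<^sup>2 * sigma\<^sup>2 / N"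
    and EG: "EG \<ge> 0" and Q: "Q \<ge> 0" and c: "c \<ge> 1" and eta: "eta > 0" and L: "L > 0"
    and J: "J \<ge> 1" and small: "eta * L * J * c \<le> 1 / 16"
  shows "F1 \<le> F0 + 2 * L * eta\<^sup>2 * J\<^sup>2 * c * vsig\<^sup>2 + eta * c\<^sup>2 * L\<^sup>2 * Q - 3 * J * eta / 8 * EG
      + L * J * eta\<^sup>2 * c\<^sup>2 * sigma\<^sup>2 / N"
proof -
  have "2 * L * eta\<^sup>2 * J\<^sup>2 * c * E4 \<le> 2 * L * eta\<^sup>2 * J\<^sup>2 * c * (vsig\<^sup>2 + EG)"
    using E4 L eta c by (intro mult_left_mono) auto
  moreover have "L * eta\<^sup>2 * E5 \<le> L * eta\<^sup>2 * (J * c\<^sup>2 * sigma\<^sup>2 / N)"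
    using E5 L by (intro mult_left_mono) auto
  moreover have "(eta * c * L\<^sup>2 / 2 + 2 * L^3 * eta\<^sup>2 * J * c\<^sup>2) * Q \<le> eta * c\<^sup>2 * L\<^sup>2 * Q"
  proof -
    have "eta * c * L\<^sup>2 / 2 + 2 * L^3 * eta\<^sup>2 * J * c\<^sup>2 = eta * L\<^sup>2 * c * (1 / 2 + 2 * (eta * L * J * c))"
      by (simp add: power2_eq_square power3_eq_cube algebra_simps)
    also have "\<dots> \<le> eta * L\<^sup>2 * c * c"
      using small eta L c by (intro mult_left_mono) auto
    finally show ?thesis using Q by (intro mult_right_mono) (auto simp: power2_eq_square mult_ac)
  qed
  moreover have "2 * L * eta\<^sup>2 * J\<^sup>2 * c * EG \<le> (eta * J) * (1 / 8) * EG"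
  proof -
    have "2 * L * eta\<^sup>2 * J\<^sup>2 * c = (eta * J) * (2 * (eta * L * J * c))"
      by (simp add: power2_eq_square algebra_simps)
    also have "\<dots> \<le> (eta * J) * (1 / 8)"
      using small eta J by (intro mult_left_mono) auto
    finally show ?thesis using EG by (rule mult_right_mono)
  qed
  ultimately show ?thesis using descent by (simp add: algebra_simps)
qed

section \<open>One round of FedKRSO\<close>

locale fedkrso_round =
  fixes M :: "'w measure" and S :: "'a measure"
    and Fn :: "nat \<Rightarrow> real^'dn^'dm \<Rightarrow> real"
    and gradFn :: "nat \<Rightarrow> real^'dn^'dm \<Rightarrow> real^'dn^'dm"
    and g :: "nat \<Rightarrow> real^'dn^'dm \<Rightarrow> 'a \<Rightarrow> real^'dn^'dm"
    and P :: "nat \<Rightarrow> nat \<Rightarrow> 'w \<Rightarrow> real^'dn^'r"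
    and kk :: "nat \<Rightarrow> nat \<Rightarrow> 'w \<Rightarrow> nat"
    and xi :: "nat \<Rightarrow> nat \<Rightarrow> nat \<Rightarrow> 'w \<Rightarrow> 'a"
    and W0 :: "real^'dn^'dm"
    and N K J t :: nat
    and L eta sigma vsig :: real
  assumes M: "prob_space M"
    and N: "N \<ge> 1" and K: "K \<ge> 1" and J: "J \<ge> 1"
    and deriv: "\<And>n W. n < N \<Longrightarrow> (Fn n has_derivative (\<lambda>H. gradFn n W \<bullet> H)) (at W)"
    and smooth: "\<And>n W1 W2. n < N \<Longrightarrow> norm (gradFn n W1 - gradFn n W2) \<le> L * norm (W1 - W2)"
    and g_meas: "\<And>n. n < N \<Longrightarrow> (\<lambda>p. g n (fst p) (snd p)) \<in> borel_measurable (borel \<Otimes>\<^sub>M S)"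
    and xi_meas: "\<And>t n j. n < N \<Longrightarrow> j < J \<Longrightarrow> xi t n j \<in> measurable M S"
    and unbiased: "\<And>t n j W. n < N \<Longrightarrow> j < J \<Longrightarrow>
        integrable M (\<lambda>w. g n W (xi t n j w)) \<and> (\<integral>w. g n W (xi t n j w) \<partial>M) = gradFn n W"
    and variance: "\<And>t n j W. n < N \<Longrightarrow> j < J \<Longrightarrow>
        integrable M (\<lambda>w. (norm (g n W (xi t n j w) - gradFn n W))\<^sup>2) \<and>
        (\<integral>w. (norm (g n W (xi t n j w) - gradFn n W))\<^sup>2 \<partial>M) \<le> sigma\<^sup>2"
    and hetero: "\<And>W. (\<Sum>n<N. (norm (gradFn n W))\<^sup>2) / real N \<le> vsig\<^sup>2 + (norm (avgGrad N gradFn W))\<^sup>2"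
    and P_meas: "\<And>t k. k < K \<Longrightarrow> P t k \<in> borel_measurable M"
    and P_orth: "\<And>t k. k < K \<Longrightarrow>
        AE w in M. P t k w ** transpose (P t k w) = (real CARD('dn) / real CARD('r)) *\<^sub>R mat 1"
    and P_mean: "\<And>t k. k < K \<Longrightarrow> (\<integral>w. transpose (P t k w) ** P t k w \<partial>M) = mat 1"
    and kk_meas: "\<And>t n. n < N \<Longrightarrow> kk t n \<in> measurable M (count_space UNIV)"
    and kk_range: "\<And>t n w. n < N \<Longrightarrow> w \<in> space M \<Longrightarrow> kk t n w < K"
    and indep: "prob_space.indep_sets M (fed_events M S P kk xi) (fed_index K N J)"
    and eta_pos: "0 < eta"
    and eta_le: "eta \<le> real CARD('r) / (16 * L * real CARD('dn) * real J)"
begin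

sublocale prob_space M by (rule M)

lemma L_pos: "L > 0"
proof (rule ccontr)
  assume "\<not> L > 0"
  then have "real CARD('r) / (16 * L * real CARD('dn) * real J) \<le> 0"
    by (intro divide_nonneg_nonpos) (simp_all add: mult_nonpos_nonneg)
  then show False using eta_le eta_pos by linarith
qed

definition gen_sigma :: "((nat \<times> nat) + (nat \<times> nat) + (nat \<times> nat \<times> nat)) set \<Rightarrow> 'w measure" where
  "gen_sigma I = Sigma_Algebra.sigma (space M) (\<Union>i\<in>I. fed_events M S P kk xi i)"
  \<comment> \<open>qualified: sigma is the noise level here\<close>

lemma fed_events_subset: "fed_events M S P kk xi i \<subseteq> Pow (space M)"
  by (auto simp: fed_events_def split: sum.splits prod.splits)

lemma space_gen_sigma: "space (gen_sigma I) = space M"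
  unfolding gen_sigma_def by (rule space_measure_of) (use fed_events_subset in blast)

lemma fed_events_in_gen_sigma:
  assumes "i \<in> I" "A \<in> fed_events M S P kk xi i"
  shows "A \<in> sets (gen_sigma I)"
proof -
  have "sets (gen_sigma I) = sigma_sets (space M) (\<Union>i\<in>I. fed_events M S P kk xi i)"
    unfolding gen_sigma_def by (rule sets_measure_of) (use fed_events_subset in blast)
  then show ?thesis using assms by auto
qed

lemma P_measurable_gen_sigma:
  assumes "Inl (t', k) \<in> I"
  shows "P t' k \<in> borel_measurable (gen_sigma I)"
proof (rule measurableI)
  fix A :: "(real^'dn^'r) set" assume "A \<in> sets borel"
  then have "P t' k -` A \<inter> space M \<in> fed_events M S P kk xi (Inl (t', k))"
    by (auto simp: fed_events_def)
  then show "P t' k -` A \<inter> space (gen_sigma I) \<in> sets (gen_sigma I)"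
    using fed_events_in_gen_sigma[OF assms] by (simp add: space_gen_sigma)
qed simp

lemma kk_measurable_gen_sigma:
  assumes "Inr (Inl (t', n)) \<in> I" and n: "n < N"
  shows "kk t' n \<in> measurable (gen_sigma I) (count_space {..<K})"
proof (rule measurableI)
  show "\<And>x. x \<in> space (gen_sigma I) \<Longrightarrow> kk t' n x \<in> space (count_space {..<K})"
    using kk_range[OF n] by (auto simp: space_gen_sigma)
  fix A :: "nat set"
  have "kk t' n -` A \<inter> space M \<in> fed_events M S P kk xi (Inr (Inl (t', n)))"
    by (auto simp: fed_events_def)
  then show "kk t' n -` A \<inter> space (gen_sigma I) \<in> sets (gen_sigma I)"
    using fed_events_in_gen_sigma[OF assms(1)] by (simp add: space_gen_sigma)
qed

lemma xi_measurable_gen_sigma: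
  assumes "Inr (Inr (t', n, j)) \<in> I" and n: "n < N" and j: "j < J"
  shows "xi t' n j \<in> measurable (gen_sigma I) S"
proof (rule measurableI)
  show "\<And>x. x \<in> space (gen_sigma I) \<Longrightarrow> xi t' n j x \<in> space S"
    using measurable_space[OF xi_meas[OF n j]] by (auto simp: space_gen_sigma)
  fix A assume "A \<in> sets S"
  then have "xi t' n j -` A \<inter> space M \<in> fed_events M S P kk xi (Inr (Inr (t', n, j)))"
    by (auto simp: fed_events_def)
  then show "xi t' n j -` A \<inter> space (gen_sigma I) \<in> sets (gen_sigma I)"
    using fed_events_in_gen_sigma[OF assms(1)] by (simp add: space_gen_sigma)
qed

lemma kk_measurable: "n < N \<Longrightarrow> kk t' n \<in> measurable M (count_space {..<K})"
  using kk_meas[of n t'] kk_range[of n] by (auto simp: measurable_def)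

lemma gradFn_measurable[measurable]: "n < N \<Longrightarrow> gradFn n \<in> borel_measurable borel"
  using smooth L_pos
  by (intro borel_measurable_continuous_onI lipschitz_on_continuous_on lipschitz_onI)
    (auto simp: dist_norm)

lemma g_measurable_comp:
  assumes n: "n < N" and "A \<in> borel_measurable M'" and "B \<in> measurable M' S"
  shows "(\<lambda>w. g n (A w) (B w)) \<in> borel_measurable M'"
proof -
  have "(\<lambda>w. (A w, B w)) \<in> measurable M' (borel \<Otimes>\<^sub>M S)" using assms by measurable
  from measurable_compose[OF this g_meas[OF n]] show ?thesis by simp
qed

lemma localB_measurable:
  assumes n: "n < N" and Wf: "Wf \<in> borel_measurable M'" and Pf: "Pf \<in> borel_measurable M'"
    and xs: "\<And>i. i < j \<Longrightarrow> xs i \<in> measurable M' S"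
  shows "(\<lambda>w. localB g eta n (Wf w) (Pf w) (\<lambda>i. xs i w) j) \<in> borel_measurable M'"
  using xs
proof (induction j)
  case 0 then show ?case by simp
next
  case (Suc j)
  then have IH: "(\<lambda>w. localB g eta n (Wf w) (Pf w) (\<lambda>i. xs i w) j) \<in> borel_measurable M'"
    and x: "xs j \<in> measurable M' S" by auto
  have "(\<lambda>w. g n (Wf w + localB g eta n (Wf w) (Pf w) (\<lambda>i. xs i w) j ** Pf w) (xs j w))
      \<in> borel_measurable M'"
    by (rule g_measurable_comp[OF n _ x]) (use IH Wf Pf in measurable)
  then show ?case using IH Pf by simp measurable
qed

lemma P_selected_measurable:
  assumes "\<And>k. k < K \<Longrightarrow> P t' k \<in> borel_measurable M'"
    and "kk t' n \<in> measurable M' (count_space {..<K})"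
  shows "(\<lambda>w. P t' (kk t' n w) w) \<in> borel_measurable M'"
  by (rule measurable_compose_countable'[OF _ assms(2)]) (use assms(1) in auto)

lemma Wrv_measurable:
  assumes P: "\<And>t' k. t' < t0 \<Longrightarrow> k < K \<Longrightarrow> P t' k \<in> borel_measurable M'"
    and kk: "\<And>t' n. t' < t0 \<Longrightarrow> n < N \<Longrightarrow> kk t' n \<in> measurable M' (count_space {..<K})"
    and xi: "\<And>t' n j. t' < t0 \<Longrightarrow> n < N \<Longrightarrow> j < J \<Longrightarrow> xi t' n j \<in> measurable M' S"
  shows "Wrv g eta N J W0 P kk xi t0 \<in> borel_measurable M'"
  using P kk xi
proof (induction t0)
  case 0 then show ?case by (simp add: Wrv_def)
next
  case (Suc t0)
  let ?W = "Wrv g eta N J W0 P kk xi t0"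
  let ?P = "\<lambda>n w. P t0 (kk t0 n w) w"
  have IH: "?W \<in> borel_measurable M'" using Suc.prems by (intro Suc.IH) auto
  have P_sel: "\<And>n. n < N \<Longrightarrow> ?P n \<in> borel_measurable M'"
    using Suc.prems by (intro P_selected_measurable) auto
  have B: "\<And>n. n < N \<Longrightarrow> (\<lambda>w. localB g eta n (?W w) (?P n w) (\<lambda>j. xi t0 n j w) J) \<in> borel_measurable M'"
    using Suc.prems by (intro localB_measurable IH P_sel) auto
  have "(\<lambda>w. \<Sum>n<N. localB g eta n (?W w) (?P n w) (\<lambda>j. xi t0 n j w) J ** ?P n w) \<in> borel_measurable M'"
    by (rule borel_measurable_sum) (use B P_sel in measurable)
  moreover have "Wrv g eta N J W0 P kk xi (Suc t0) = (\<lambda>w. ?W w + (1 / real N) *\<^sub>R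
      (\<Sum>n<N. localB g eta n (?W w) (?P n w) (\<lambda>j. xi t0 n j w) J ** ?P n w))"
    by (simp add: Wrv_def fun_eq_iff)
  ultimately show ?case using IH by simp
qed

text \<open>In the notation of the paper: Wt = W^t, Pn n = P^t_k(n), BP n j = B^(t,j)_(k(n),n) P^t_k(n),
  Wloc n j = W^(t,j)_n, and Proj n = (P^t_k(n))^T P^t_k(n).\<close>

definition dr_ratio :: real where "dr_ratio = real CARD('dn) / real CARD('r)"
definition Wt where "Wt = Wrv g eta N J W0 P kk xi t"
definition Pn where "Pn n w = P t (kk t n w) w"
definition Proj where "Proj n w = transpose (Pn n w) ** Pn n w"
definition BP where "BP n j w = Brv g eta N J W0 P kk xi t n j w ** Pn n w"
definition Wloc where "Wloc n j w = Wt w + BP n j w"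
definition noise where "noise n j w = g n (Wloc n j w) (xi t n j w) - gradFn n (Wloc n j w)"
definition gradF where "gradF w = avgGrad N gradFn (Wt w)"

lemma dr_ratio_pos: "dr_ratio > 0" by (simp add: dr_ratio_def)

lemma BP_eq_sum: "BP n j w = - eta *\<^sub>R (\<Sum>i<j. g n (Wloc n i w) (xi t n i w) ** Proj n w)"
proof (induction j)
  case 0 then show ?case by (simp add: BP_def Brv_def)
next
  case (Suc j)
  have "BP n (Suc j) w = BP n j w - eta *\<^sub>R (g n (Wloc n j w) (xi t n j w) ** Proj n w)"
    unfolding BP_def Proj_def
    by (simp add: Brv_def Wloc_def BP_def Pn_def Wt_def matrix_diff_rdistrib matrix_mult_scaleR_left
        matrix_mul_assoc)
  then show ?case unfolding Suc.IH by (simp add: scaleR_add_right)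
qed

lemma Wrv_Suc_eq: "Wrv g eta N J W0 P kk xi (Suc t) w = Wt w +
   (- eta / real N) *\<^sub>R (\<Sum>n<N. \<Sum>j<J. (gradFn n (Wloc n j w) + noise n j w) ** Proj n w)"
proof -
  have "Wrv g eta N J W0 P kk xi (Suc t) w = Wt w + (1 / real N) *\<^sub>R (\<Sum>n<N. BP n J w)"
    by (simp add: Wrv_def Wt_def BP_def Brv_def Pn_def)
  then show ?thesis
    by (simp add: BP_eq_sum noise_def scaleR_sum_right)
qed

lemma AE_P_orth: "AE w in M. \<forall>k\<in>{..<K}. P t k w ** transpose (P t k w) = dr_ratio *\<^sub>R mat 1"
  unfolding dr_ratio_def by (subst AE_finite_all) (auto intro: P_orth)

lemma AE_Proj:
  "AE w in M. \<forall>n<N. Proj n w ** Proj n w = dr_ratio *\<^sub>R Proj n w \<and> transpose (Proj n w) = Proj n w"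
  using AE_P_orth AE_space
proof eventually_elim
  case (elim w)
  have "Pn n w ** transpose (Pn n w) = dr_ratio *\<^sub>R mat 1" if "n < N" for n
    using elim kk_range[OF that] by (simp add: Pn_def)
  then show ?case unfolding Proj_def by (auto intro: transpose_mult_self_square simp: matrix_transpose_mul)
qed

lemma AE_norm_mult_Proj_le:
  "AE w in M. \<forall>n<N. \<forall>X::real^'dn^'dm. norm (X ** Proj n w) \<le> dr_ratio * norm X"
  using AE_Proj by eventually_elim (use norm_mult_proj_le less_imp_le[OF dr_ratio_pos] in blast)

lemma Wt_measurable_wrt:
  assumes "\<And>t' k. t' < t \<Longrightarrow> k < K \<Longrightarrow> P t' k \<in> borel_measurable M'"
    and "\<And>t' n. t' < t \<Longrightarrow> n < N \<Longrightarrow> kk t' n \<in> measurable M' (count_space {..<K})"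
    and "\<And>t' n j. t' < t \<Longrightarrow> n < N \<Longrightarrow> j < J \<Longrightarrow> xi t' n j \<in> measurable M' S"
  shows "Wt \<in> borel_measurable M'"
  unfolding Wt_def by (rule Wrv_measurable) (use assms in auto)

lemma Proj_measurable_wrt:
  assumes "\<And>k. k < K \<Longrightarrow> P t k \<in> borel_measurable M'" and "kk t n \<in> measurable M' (count_space {..<K})"
  shows "Pn n \<in> borel_measurable M'" and "Proj n \<in> borel_measurable M'"
proof -
  show Pn: "Pn n \<in> borel_measurable M'"
    unfolding Pn_def[abs_def] by (rule P_selected_measurable) (use assms in auto)
  show "Proj n \<in> borel_measurable M'"
    unfolding Proj_def[abs_def] using Pn by measurable
qed

lemma Wloc_measurable_wrt:
  assumes n: "n < N" and Wt: "Wt \<in> borel_measurable M'" and Pn: "Pn n \<in> borel_measurable M'"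
    and xi: "\<And>i. i < j \<Longrightarrow> xi t n i \<in> measurable M' S"
  shows "BP n j \<in> borel_measurable M'" and "Wloc n j \<in> borel_measurable M'"
proof -
  have "(\<lambda>w. localB g eta n (Wt w) (Pn n w) (\<lambda>i. xi t n i w) j) \<in> borel_measurable M'"
    by (rule localB_measurable[OF n Wt Pn xi])
  then show BP: "BP n j \<in> borel_measurable M'"
    unfolding BP_def[abs_def] Brv_def using Pn
    by (simp add: Wt_def[symmetric] Pn_def[symmetric]) measurable
  show "Wloc n j \<in> borel_measurable M'"
    unfolding Wloc_def[abs_def] using Wt BP by measurable
qed

lemma noise_measurable_wrt:
  assumes n: "n < N" and Wloc: "Wloc n j \<in> borel_measurable M'" and xi: "xi t n j \<in> measurable M' S"
  shows "noise n j \<in> borel_measurable M'"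
proof -
  have "(\<lambda>w. g n (Wloc n j w) (xi t n j w)) \<in> borel_measurable M'"
    by (rule g_measurable_comp[OF n Wloc xi])
  then show ?thesis unfolding noise_def[abs_def] using Wloc gradFn_measurable[OF n] by measurable
qed

lemma Wt_measurable[measurable]: "Wt \<in> borel_measurable M"
  by (rule Wt_measurable_wrt) (auto intro: P_meas kk_measurable xi_meas)

lemma Pn_measurable[measurable]: "n < N \<Longrightarrow> Pn n \<in> borel_measurable M"
  and Proj_measurable[measurable]: "n < N \<Longrightarrow> Proj n \<in> borel_measurable M"
  by (rule Proj_measurable_wrt; auto intro: P_meas kk_measurable)+

lemma Wloc_measurable[measurable]: "n < N \<Longrightarrow> j \<le> J \<Longrightarrow> Wloc n j \<in> borel_measurable M"
  by (rule Wloc_measurable_wrt(2)) (auto intro: xi_meas)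

lemma noise_measurable[measurable]: "n < N \<Longrightarrow> j < J \<Longrightarrow> noise n j \<in> borel_measurable M"
  by (rule noise_measurable_wrt) (auto intro: xi_meas)

lemma avgGrad_measurable[measurable]: "avgGrad N gradFn \<in> borel_measurable borel"
proof -
  have "(\<lambda>W. \<Sum>n<N. gradFn n W) \<in> borel_measurable borel"
    by (rule borel_measurable_sum) (simp add: gradFn_measurable)
  then show ?thesis unfolding avgGrad_def[abs_def] by measurable
qed

lemma gradF_measurable[measurable]: "gradF \<in> borel_measurable M"
  unfolding gradF_def[abs_def] by measurable

lemma indep_distr_pair:
  assumes a: "a \<in> fed_index K N J"
    and Z: "Z \<in> measurable (gen_sigma (fed_index K N J - {a})) T"
    and V: "V \<in> measurable M Sa"
    and V_events: "\<And>A. A \<in> sets Sa \<Longrightarrow> V -` A \<inter> space M \<in> fed_events M S P kk xi a"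
  shows "Z \<in> measurable M T"
    and "distr M T Z \<Otimes>\<^sub>M distr M Sa V = distr M (T \<Otimes>\<^sub>M Sa) (\<lambda>w. (Z w, V w))"
proof -
  have "Int_stable (fed_events M S P kk xi i)" for i
    unfolding fed_events_def
    by (auto split: sum.split prod.split
        intro: Int_stable_vimage Int_stable_vimage[of _ _ "count_space UNIV", simplified])
  from indep_sets_distr_pair[OF indep a this Z[unfolded gen_sigma_def] V V_events]
  show "Z \<in> measurable M T"
    and "distr M T Z \<Otimes>\<^sub>M distr M Sa V = distr M (T \<Otimes>\<^sub>M Sa) (\<lambda>w. (Z w, V w))" by auto
qed

abbreviation sigma_without where "sigma_without a \<equiv> gen_sigma (fed_index K N J - {a})"

lemma Wt_measurable_sigma_without:
  assumes "\<forall>t'<t. \<forall>k<K. Inl (t', k) \<noteq> a" "\<forall>t'<t. \<forall>n<N. Inr (Inl (t', n)) \<noteq> a"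
    "\<forall>t'<t. \<forall>n<N. \<forall>j<J. Inr (Inr (t', n, j)) \<noteq> a"
  shows "Wt \<in> borel_measurable (sigma_without a)"
  using assms
  by (intro Wt_measurable_wrt P_measurable_gen_sigma kk_measurable_gen_sigma xi_measurable_gen_sigma)
    (auto simp: fed_index_def)

lemma measurable_sigma_without_xi:
  assumes n0: "n0 < N" and j0: "j0 < J"
  defines "M' \<equiv> sigma_without (Inr (Inr (t, n0, j0)))"
  shows "\<And>n. n < N \<Longrightarrow> Proj n \<in> borel_measurable M'"
    and "\<And>n j. n < N \<Longrightarrow> j \<le> J \<Longrightarrow> (n = n0 \<longrightarrow> j \<le> j0) \<Longrightarrow> Wloc n j \<in> borel_measurable M'"
    and "\<And>n j. n < N \<Longrightarrow> j < J \<Longrightarrow> (n = n0 \<longrightarrow> j < j0) \<Longrightarrow> noise n j \<in> borel_measurable M'"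
    and "gradF \<in> borel_measurable M'"
proof -
  have Wt: "Wt \<in> borel_measurable M'"
    unfolding M'_def by (rule Wt_measurable_sigma_without) auto
  have xi: "xi t n j \<in> measurable M' S" if "n < N" "j < J" "n = n0 \<longrightarrow> j < j0" for n j
    unfolding M'_def using that by (intro xi_measurable_gen_sigma) (auto simp: fed_index_def)
  have Pn: "Pn n \<in> borel_measurable M'" and Proj: "Proj n \<in> borel_measurable M'" if n: "n < N" for n
    unfolding M'_def
    by (rule Proj_measurable_wrt; use n in \<open>auto intro!: P_measurable_gen_sigma kk_measurable_gen_sigma
          simp: fed_index_def\<close>)+
  then show "\<And>n. n < N \<Longrightarrow> Proj n \<in> borel_measurable M'" by blast
  show Wloc: "\<And>n j. n < N \<Longrightarrow> j \<le> J \<Longrightarrow> (n = n0 \<longrightarrow> j \<le> j0) \<Longrightarrow> Wloc n j \<in> borel_measurable M'"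
    by (rule Wloc_measurable_wrt[OF _ Wt Pn]) (auto intro!: xi)
  show "\<And>n j. n < N \<Longrightarrow> j < J \<Longrightarrow> (n = n0 \<longrightarrow> j < j0) \<Longrightarrow> noise n j \<in> borel_measurable M'"
    by (rule noise_measurable_wrt[OF _ Wloc xi]) auto
  show "gradF \<in> borel_measurable M'"
    unfolding gradF_def[abs_def] using Wt by measurable
qed

lemma PtP_integrable:
  assumes k: "k < K" shows "integrable M (\<lambda>w. transpose (P t' k w) ** P t' k w)"
proof (rule ccontr)
  assume "\<not> integrable M (\<lambda>w. transpose (P t' k w) ** P t' k w)"
  then have "(\<integral>w. transpose (P t' k w) ** P t' k w \<partial>M) = 0" by (rule not_integrable_integral_eq)
  then have "(mat 1 :: real^'dn^'dn) = 0" using P_mean[OF k] by simp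
  then have "(mat 1 :: real^'dn^'dn) $ undefined $ undefined = 0" by simp
  then show False by (simp add: mat_def)
qed

lemma AE_norm_mult_PtP_le:
  "AE w in M. \<forall>k<K. \<forall>X::real^'dn^'dm. norm (X ** (transpose (P t k w) ** P t k w)) \<le> dr_ratio * norm X"
  using AE_P_orth
proof eventually_elim
  case (elim w)
  show ?case
  proof (intro allI impI)
    fix k and X :: "real^'dn^'dm" assume "k < K"
    with elim show "norm (X ** (transpose (P t k w) ** P t k w)) \<le> dr_ratio * norm X"
      by (intro norm_mult_proj_le transpose_mult_self_square less_imp_le[OF dr_ratio_pos])
        (auto simp: matrix_transpose_mul)
  qed
qed

lemma indep_Wt_selector_P:
  assumes n: "n < N" and k: "k < K"
  shows "(\<lambda>w. (Wt w, of_bool (kk t n w = k) :: real)) \<in> measurable M (borel \<Otimes>\<^sub>M borel)"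
    and "distr M (borel \<Otimes>\<^sub>M borel) (\<lambda>w. (Wt w, of_bool (kk t n w = k) :: real)) \<Otimes>\<^sub>M distr M borel (P t k)
      = distr M ((borel \<Otimes>\<^sub>M borel) \<Otimes>\<^sub>M borel) (\<lambda>w. ((Wt w, of_bool (kk t n w = k)), P t k w))"
proof -
  let ?a = "Inl (t, k) :: (nat \<times> nat) + (nat \<times> nat) + (nat \<times> nat \<times> nat)"
  have a: "?a \<in> fed_index K N J" using k by (simp add: fed_index_def)
  have "kk t n \<in> measurable (sigma_without ?a) (count_space {..<K})"
    by (rule kk_measurable_gen_sigma) (auto simp: fed_index_def n)
  from measurable_compose[OF this, of "\<lambda>m. of_bool (m = k)" borel]
  have "(\<lambda>w. of_bool (kk t n w = k) :: real) \<in> borel_measurable (sigma_without ?a)" by simp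
  moreover have "Wt \<in> borel_measurable (sigma_without ?a)"
    by (rule Wt_measurable_sigma_without) auto
  ultimately have "(\<lambda>w. (Wt w, of_bool (kk t n w = k) :: real)) \<in> measurable (sigma_without ?a) (borel \<Otimes>\<^sub>M borel)"
    by measurable
  from indep_distr_pair[OF a this P_meas[OF k]]
  show "(\<lambda>w. (Wt w, of_bool (kk t n w = k) :: real)) \<in> measurable M (borel \<Otimes>\<^sub>M borel)"
    and "distr M (borel \<Otimes>\<^sub>M borel) (\<lambda>w. (Wt w, of_bool (kk t n w = k) :: real)) \<Otimes>\<^sub>M distr M borel (P t k)
      = distr M ((borel \<Otimes>\<^sub>M borel) \<Otimes>\<^sub>M borel) (\<lambda>w. ((Wt w, of_bool (kk t n w = k)), P t k w))"
    by (auto simp: fed_events_def)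
qed

text \<open>P^t_k is independent of W^t and of the index drawn by client n, so its second moment
  E[P^T P] = I can be substituted inside the expectation.\<close>

lemma integral_select_inner_PtP:
  fixes \<phi> \<psi> :: "real^'dn^'dm \<Rightarrow> real^'dn^'dm"
  assumes n: "n < N" and k: "k < K"
    and [measurable]: "\<phi> \<in> borel_measurable borel" "\<psi> \<in> borel_measurable borel"
    and int_\<phi>: "integrable M (\<lambda>w. (norm (\<phi> (Wt w)))\<^sup>2)" and int_\<psi>: "integrable M (\<lambda>w. (norm (\<psi> (Wt w)))\<^sup>2)"
  shows "integrable M (\<lambda>w. of_bool (kk t n w = k) * inner (\<phi> (Wt w)) (\<psi> (Wt w) ** (transpose (P t k w) ** P t k w)))"
    and "(\<integral>w. of_bool (kk t n w = k) * inner (\<phi> (Wt w)) (\<psi> (Wt w) ** (transpose (P t k w) ** P t k w)) \<partial>M)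
      = (\<integral>w. of_bool (kk t n w = k) * inner (\<phi> (Wt w)) (\<psi> (Wt w)) \<partial>M)"
proof -
  let ?ind = "\<lambda>w. of_bool (kk t n w = k) :: real"
  note Z = indep_Wt_selector_P[OF n k]
  define F where "F p = snd (fst p) * inner (\<phi> (fst (fst p))) (\<psi> (fst (fst p)) ** (transpose (snd p) ** snd p))"
    for p :: "((real^'dn^'dm) \<times> real) \<times> (real^'dn^'r)"
  have P_k[measurable]: "P t k \<in> borel_measurable M" by (rule P_meas[OF k])
  have ind_M[measurable]: "?ind \<in> borel_measurable M"
    using measurable_compose[OF kk_measurable[OF n], of "\<lambda>m. of_bool (m = k)" borel] by simp
  have "integrable M (\<lambda>w. (norm (\<psi> (Wt w) ** (transpose (P t k w) ** P t k w)))\<^sup>2)"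
  proof (rule integrable_norm_sq_bound[OF _ int_\<psi>])
    show "AE w in M. norm (\<psi> (Wt w) ** (transpose (P t k w) ** P t k w)) \<le> dr_ratio * norm (\<psi> (Wt w))"
      using AE_norm_mult_PtP_le by eventually_elim (use k in blast)
  qed measurable
  then have "integrable M (\<lambda>w. inner (\<phi> (Wt w)) (\<psi> (Wt w) ** (transpose (P t k w) ** P t k w)))"
    by (intro integrable_inner int_\<phi>) measurable
  then show int: "integrable M (\<lambda>w. ?ind w * inner (\<phi> (Wt w)) (\<psi> (Wt w) ** (transpose (P t k w) ** P t k w)))"
  proof (rule Bochner_Integration.integrable_bound)
    show "(\<lambda>w. ?ind w * inner (\<phi> (Wt w)) (\<psi> (Wt w) ** (transpose (P t k w) ** P t k w))) \<in> borel_measurable M"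
      by measurable
  qed (rule AE_I2, simp)
  interpret PV: prob_space "distr M borel (P t k)" by (rule prob_space_distr[OF P_meas[OF k]])
  have int_PtP: "integrable (distr M borel (P t k)) (\<lambda>p. transpose p ** p)"
    by (subst integrable_distr_eq) (use P_meas[OF k] PtP_integrable[OF k] in auto)
  have mean_PtP: "(\<integral>p. transpose p ** p \<partial>distr M borel (P t k)) = mat 1"
    by (subst integral_distr) (use P_meas[OF k] P_mean[OF k] in auto)
  have F_meas: "F \<in> borel_measurable ((borel \<Otimes>\<^sub>M borel) \<Otimes>\<^sub>M borel)"
    unfolding F_def[abs_def] by measurable
  have "(\<integral>w. ?ind w * inner (\<phi> (Wt w)) (\<psi> (Wt w) ** (transpose (P t k w) ** P t k w)) \<partial>M)
      = (\<integral>w. F ((Wt w, ?ind w), P t k w) \<partial>M)"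
    by (simp add: F_def)
  also have "\<dots> = (\<integral>w. (\<integral>p. F ((Wt w, ?ind w), p) \<partial>distr M borel (P t k)) \<partial>M)"
    by (rule integral_indep_pair[OF Z(1) P_k Z(2) F_meas]) (use int in \<open>simp add: F_def\<close>)
  also have "\<dots> = (\<integral>w. ?ind w * inner (\<phi> (Wt w)) (\<psi> (Wt w) ** (\<integral>p. transpose p ** p \<partial>distr M borel (P t k))) \<partial>M)"
  proof (rule Bochner_Integration.integral_cong[OF refl])
    fix w
    show "(\<integral>p. F ((Wt w, ?ind w), p) \<partial>distr M borel (P t k))
      = ?ind w * inner (\<phi> (Wt w)) (\<psi> (Wt w) ** (\<integral>p. transpose p ** p \<partial>distr M borel (P t k)))"
      unfolding F_def fst_conv snd_conv
      by (rule integral_bounded_linear[OF bounded_linear_inner_matrix_mult int_PtP])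
  qed
  finally show "(\<integral>w. ?ind w * inner (\<phi> (Wt w)) (\<psi> (Wt w) ** (transpose (P t k w) ** P t k w)) \<partial>M)
      = (\<integral>w. ?ind w * inner (\<phi> (Wt w)) (\<psi> (Wt w)) \<partial>M)"
    by (simp add: mean_PtP)
qed

lemma integral_inner_mult_Proj:
  fixes \<phi> \<psi> :: "real^'dn^'dm \<Rightarrow> real^'dn^'dm"
  assumes n: "n < N"
    and [measurable]: "\<phi> \<in> borel_measurable borel" "\<psi> \<in> borel_measurable borel"
    and int_\<phi>: "integrable M (\<lambda>w. (norm (\<phi> (Wt w)))\<^sup>2)" and int_\<psi>: "integrable M (\<lambda>w. (norm (\<psi> (Wt w)))\<^sup>2)"
  shows "integrable M (\<lambda>w. inner (\<phi> (Wt w)) (\<psi> (Wt w) ** Proj n w))"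
    and "(\<integral>w. inner (\<phi> (Wt w)) (\<psi> (Wt w) ** Proj n w) \<partial>M) = (\<integral>w. inner (\<phi> (Wt w)) (\<psi> (Wt w)) \<partial>M)"
proof -
  let ?ind = "\<lambda>k w. of_bool (kk t n w = k) :: real"
  let ?f = "\<lambda>k w. ?ind k w * inner (\<phi> (Wt w)) (\<psi> (Wt w) ** (transpose (P t k w) ** P t k w))"
  let ?h = "\<lambda>k w. ?ind k w * inner (\<phi> (Wt w)) (\<psi> (Wt w))"
  note select = integral_select_inner_PtP[OF n _ assms(2-5)]
  have f_sum: "inner (\<phi> (Wt w)) (\<psi> (Wt w) ** Proj n w) = (\<Sum>k<K. ?f k w)"
    and h_sum: "inner (\<phi> (Wt w)) (\<psi> (Wt w)) = (\<Sum>k<K. ?h k w)" if "w \<in> space M" for w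
  proof -
    have "{..<K} \<inter> {k. kk t n w = k} = {kk t n w}" using kk_range[OF n that] by auto
    then show "inner (\<phi> (Wt w)) (\<psi> (Wt w) ** Proj n w) = (\<Sum>k<K. ?f k w)"
      and "inner (\<phi> (Wt w)) (\<psi> (Wt w)) = (\<Sum>k<K. ?h k w)"
      by (simp_all add: Proj_def Pn_def)
  qed
  have "integrable M (\<lambda>w. inner (\<phi> (Wt w)) (\<psi> (Wt w)))"
    by (intro integrable_inner int_\<phi> int_\<psi>) measurable
  then have int_h: "integrable M (?h k)" for k
  proof (rule Bochner_Integration.integrable_bound)
    show "?h k \<in> borel_measurable M"
      using measurable_compose[OF kk_measurable[OF n], of "\<lambda>m. of_bool (m = k)" borel] by measurable
  qed (rule AE_I2, simp)
  have int_f: "integrable M (\<lambda>w. \<Sum>k<K. ?f k w)"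
    by (rule Bochner_Integration.integrable_sum) (use select(1) in simp)
  show "integrable M (\<lambda>w. inner (\<phi> (Wt w)) (\<psi> (Wt w) ** Proj n w))"
  proof (subst Bochner_Integration.integrable_cong[OF refl])
    show "inner (\<phi> (Wt w)) (\<psi> (Wt w) ** Proj n w) = (\<Sum>k<K. ?f k w)" if "w \<in> space M" for w
      by (rule f_sum[OF that])
  qed (rule int_f)
  have "(\<integral>w. inner (\<phi> (Wt w)) (\<psi> (Wt w) ** Proj n w) \<partial>M) = (\<integral>w. (\<Sum>k<K. ?f k w) \<partial>M)"
    by (rule Bochner_Integration.integral_cong[OF refl]) (rule f_sum)
  also have "\<dots> = (\<Sum>k<K. (\<integral>w. ?f k w \<partial>M))"
    by (rule Bochner_Integration.integral_sum) (use select(1) in simp)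
  also have "\<dots> = (\<Sum>k<K. (\<integral>w. ?h k w \<partial>M))"
    by (rule sum.cong[OF refl]) (use select(2) in simp)
  also have "\<dots> = (\<integral>w. (\<Sum>k<K. ?h k w) \<partial>M)"
    by (rule Bochner_Integration.integral_sum[symmetric]) (use int_h in simp)
  also have "\<dots> = (\<integral>w. inner (\<phi> (Wt w)) (\<psi> (Wt w)) \<partial>M)"
    by (rule Bochner_Integration.integral_cong[OF refl]) (rule h_sum[symmetric])
  finally show "(\<integral>w. inner (\<phi> (Wt w)) (\<psi> (Wt w) ** Proj n w) \<partial>M) = (\<integral>w. inner (\<phi> (Wt w)) (\<psi> (Wt w)) \<partial>M)" .
qed

lemma indep_distr_pair_xi:
  assumes n: "n < N" and j: "j < J"
    and Z: "Z \<in> measurable (sigma_without (Inr (Inr (t, n, j)))) T"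
  shows "Z \<in> measurable M T"
    and "distr M T Z \<Otimes>\<^sub>M distr M S (xi t n j) = distr M (T \<Otimes>\<^sub>M S) (\<lambda>w. (Z w, xi t n j w))"
  using indep_distr_pair[OF _ Z xi_meas[OF n j]] n j by (auto simp: fed_index_def fed_events_def)

lemma g_measurable_sample: "n < N \<Longrightarrow> (\<lambda>x. g n W x) \<in> borel_measurable S"
  using measurable_compose[OF _ g_meas, of "\<lambda>x. (W, x)" S n] by simp

lemma noise_second_moment:
  assumes n: "n < N" and j: "j < J"
  shows "integrable M (\<lambda>w. (norm (noise n j w))\<^sup>2)" and "(\<integral>w. (norm (noise n j w))\<^sup>2 \<partial>M) \<le> sigma\<^sup>2"
proof -
  have "Wloc n j \<in> borel_measurable (sigma_without (Inr (Inr (t, n, j))))"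
    by (rule measurable_sigma_without_xi(2)[OF n j n]) (use j in auto)
  note Z = indep_distr_pair_xi[OF n j this]
  define F where "F p = ennreal ((norm (g n (fst p) (snd p) - gradFn n (fst p)))\<^sup>2)" for p
  have F_meas: "F \<in> borel_measurable (borel \<Otimes>\<^sub>M S)"
    unfolding F_def[abs_def] using g_meas[OF n] gradFn_measurable[OF n] by measurable
  have inner_bound: "(\<integral>\<^sup>+x. F (W, x) \<partial>distr M S (xi t n j)) \<le> ennreal (sigma\<^sup>2)" for W
  proof -
    have "(\<lambda>x. F (W, x)) \<in> borel_measurable S"
      unfolding F_def fst_conv snd_conv using g_measurable_sample[OF n] by measurable
    then have "(\<integral>\<^sup>+x. F (W, x) \<partial>distr M S (xi t n j)) = (\<integral>\<^sup>+w. F (W, xi t n j w) \<partial>M)"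
      by (intro nn_integral_distr xi_meas n j) simp
    also have "\<dots> = ennreal (\<integral>w. (norm (g n W (xi t n j w) - gradFn n W))\<^sup>2 \<partial>M)"
      unfolding F_def fst_conv snd_conv
      by (rule nn_integral_eq_integral) (use variance[where t=t and W=W, OF n j] in auto)
    also have "\<dots> \<le> ennreal (sigma\<^sup>2)"
      using variance[where t=t and W=W, OF n j] by (simp add: ennreal_leI)
    finally show ?thesis .
  qed
  have "(\<integral>\<^sup>+w. ennreal ((norm (noise n j w))\<^sup>2) \<partial>M) = (\<integral>\<^sup>+w. F (Wloc n j w, xi t n j w) \<partial>M)"
    by (simp add: F_def noise_def)
  also have "\<dots> = (\<integral>\<^sup>+w. (\<integral>\<^sup>+x. F (Wloc n j w, x) \<partial>distr M S (xi t n j)) \<partial>M)"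
    by (rule nn_integral_indep_pair[OF Z(1) xi_meas[OF n j] Z(2) F_meas])
  also have "\<dots> \<le> (\<integral>\<^sup>+w. ennreal (sigma\<^sup>2) \<partial>M)"
    by (rule nn_integral_mono) (rule inner_bound)
  also have "\<dots> = ennreal (sigma\<^sup>2)" by (simp add: emeasure_space_1)
  finally have nn: "(\<integral>\<^sup>+w. ennreal ((norm (noise n j w))\<^sup>2) \<partial>M) \<le> ennreal (sigma\<^sup>2)" .
  have meas: "(\<lambda>w. (norm (noise n j w))\<^sup>2) \<in> borel_measurable M" using n j by measurable
  show "integrable M (\<lambda>w. (norm (noise n j w))\<^sup>2)"
    by (rule integrableI_nonneg[OF meas]) (use nn in \<open>auto simp: top.not_eq_extremum intro: le_less_trans\<close>)
  have "(\<integral>w. (norm (noise n j w))\<^sup>2 \<partial>M) = enn2real (\<integral>\<^sup>+w. ennreal ((norm (noise n j w))\<^sup>2) \<partial>M)"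
    by (rule integral_eq_nn_integral[OF meas]) simp
  also have "\<dots> \<le> sigma\<^sup>2" by (rule enn2real_leI[OF _ nn]) simp
  finally show "(\<integral>w. (norm (noise n j w))\<^sup>2 \<partial>M) \<le> sigma\<^sup>2" .
qed

lemma integral_inner_noise_eq_0:
  assumes n: "n < N" and j: "j < J"
    and Y: "Y \<in> borel_measurable (sigma_without (Inr (Inr (t, n, j))))"
    and int_Y: "integrable M (\<lambda>w. (norm (Y w))\<^sup>2)"
  shows "integrable M (\<lambda>w. inner (noise n j w) (Y w))" and "(\<integral>w. inner (noise n j w) (Y w) \<partial>M) = 0"
proof -
  have "Wloc n j \<in> borel_measurable (sigma_without (Inr (Inr (t, n, j))))"
    by (rule measurable_sigma_without_xi(2)[OF n j n]) (use j in auto)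
  then have "(\<lambda>w. (Wloc n j w, Y w)) \<in> measurable (sigma_without (Inr (Inr (t, n, j)))) (borel \<Otimes>\<^sub>M borel)"
    using Y by measurable
  note Z = indep_distr_pair_xi[OF n j this]
  have "Y \<in> borel_measurable M" using Z(1) by measurable
  then show int: "integrable M (\<lambda>w. inner (noise n j w) (Y w))"
    by (intro integrable_inner noise_second_moment(1)[OF n j] int_Y noise_measurable n j)
  define F where "F p = inner (g n (fst (fst p)) (snd p) - gradFn n (fst (fst p))) (snd (fst p))" for p
  have "(\<lambda>p. (fst (fst p), snd p)) \<in> measurable ((borel \<Otimes>\<^sub>M borel) \<Otimes>\<^sub>M S) (borel \<Otimes>\<^sub>M S)"
    by measurable
  from measurable_compose[OF this g_meas[OF n]]
  have [measurable]: "(\<lambda>p. g n (fst (fst p)) (snd p)) \<in> borel_measurable ((borel \<Otimes>\<^sub>M borel) \<Otimes>\<^sub>M S)"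
    by simp
  have F_meas: "F \<in> borel_measurable ((borel \<Otimes>\<^sub>M borel) \<Otimes>\<^sub>M S)"
    unfolding F_def[abs_def] using gradFn_measurable[OF n] by measurable
  have mean_zero: "(\<integral>x. F ((W, y), x) \<partial>distr M S (xi t n j)) = 0" for W y
  proof -
    interpret PV: prob_space "distr M S (xi t n j)" by (rule prob_space_distr[OF xi_meas[OF n j]])
    have int_g: "integrable (distr M S (xi t n j)) (\<lambda>x. g n W x)"
      by (subst integrable_distr_eq[OF xi_meas[OF n j] g_measurable_sample[OF n]])
        (use unbiased[where t=t and W=W, OF n j] in simp)
    have "(\<integral>x. g n W x \<partial>distr M S (xi t n j)) = gradFn n W"
      by (subst integral_distr[OF xi_meas[OF n j] g_measurable_sample[OF n]])
        (use unbiased[where t=t and W=W, OF n j] in simp)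
    then have "(\<integral>x. g n W x - gradFn n W \<partial>distr M S (xi t n j)) = 0"
      using int_g PV.prob_space by simp
    then show ?thesis
      unfolding F_def fst_conv snd_conv using int_g by (simp add: integral_inner_left)
  qed
  have "(\<integral>w. inner (noise n j w) (Y w) \<partial>M) = (\<integral>w. F ((Wloc n j w, Y w), xi t n j w) \<partial>M)"
    by (simp add: F_def noise_def)
  also have "\<dots> = (\<integral>w. (\<integral>x. F ((Wloc n j w, Y w), x) \<partial>distr M S (xi t n j)) \<partial>M)"
    by (rule integral_indep_pair[OF Z(1) xi_meas[OF n j] Z(2) F_meas]) (use int in \<open>simp add: F_def noise_def\<close>)
  also have "\<dots> = 0" by (simp add: mean_zero)
  finally show "(\<integral>w. inner (noise n j w) (Y w) \<partial>M) = 0" .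
qed

definition noise_avg where "noise_avg w = (1 / real N) *\<^sub>R (\<Sum>n<N. \<Sum>j<J. noise n j w ** Proj n w)"

lemma noise_avg_measurable[measurable]: "noise_avg \<in> borel_measurable M"
proof -
  have "(\<lambda>w. \<Sum>n<N. \<Sum>j<J. noise n j w ** Proj n w) \<in> borel_measurable M"
    by (intro borel_measurable_sum) (use noise_measurable Proj_measurable in measurable)
  then show ?thesis unfolding noise_avg_def[abs_def] by measurable
qed

lemma norm_noise_mult_Proj_sq:
  assumes n: "n < N" and j: "j < J"
  shows "integrable M (\<lambda>w. (norm (noise n j w ** Proj n w))\<^sup>2)"
    and "(\<integral>w. (norm (noise n j w ** Proj n w))\<^sup>2 \<partial>M) \<le> dr_ratio\<^sup>2 * sigma\<^sup>2"
proof -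
  have bound: "AE w in M. (norm (noise n j w ** Proj n w))\<^sup>2 \<le> dr_ratio\<^sup>2 * (norm (noise n j w))\<^sup>2"
    using AE_norm_mult_Proj_le
  proof eventually_elim
    case (elim w)
    then have "norm (noise n j w ** Proj n w) \<le> dr_ratio * norm (noise n j w)" using n by blast
    from power_mono[OF this norm_ge_zero, of 2] show ?case by (simp add: power_mult_distrib)
  qed
  show int: "integrable M (\<lambda>w. (norm (noise n j w ** Proj n w))\<^sup>2)"
    by (rule integrable_norm_sq_bound[OF _ noise_second_moment(1)[OF n j], of _ dr_ratio])
      (use n j AE_norm_mult_Proj_le in \<open>auto elim: AE_mp\<close>)
  have "(\<integral>w. (norm (noise n j w ** Proj n w))\<^sup>2 \<partial>M) \<le> (\<integral>w. dr_ratio\<^sup>2 * (norm (noise n j w))\<^sup>2 \<partial>M)"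
    using noise_second_moment(1)[OF n j] by (intro integral_mono_AE int bound) simp
  also have "\<dots> \<le> dr_ratio\<^sup>2 * sigma\<^sup>2"
    using noise_second_moment(2)[OF n j] by (simp add: mult_left_mono)
  finally show "(\<integral>w. (norm (noise n j w ** Proj n w))\<^sup>2 \<partial>M) \<le> dr_ratio\<^sup>2 * sigma\<^sup>2" .
qed

lemma integral_inner_noise_cross_eq_0:
  assumes n: "n < N" and j: "j < J" and n': "n' < N" and j': "j' < J" and before: "n \<noteq> n' \<or> j < j'"
  shows "integrable M (\<lambda>w. inner (noise n j w ** Proj n w) (noise n' j' w ** Proj n' w))"
    and "(\<integral>w. inner (noise n j w ** Proj n w) (noise n' j' w ** Proj n' w) \<partial>M) = 0"
proof -
  define Y where "Y w = (noise n j w ** Proj n w) ** transpose (Proj n' w)" for w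
  have "noise n j \<in> borel_measurable (sigma_without (Inr (Inr (t, n', j'))))"
    by (rule measurable_sigma_without_xi(3)[OF n' j' n j]) (use before in auto)
  then have Y_meas: "Y \<in> borel_measurable (sigma_without (Inr (Inr (t, n', j'))))"
    unfolding Y_def[abs_def]
    using measurable_sigma_without_xi(1)[OF n' j' n] measurable_sigma_without_xi(1)[OF n' j' n'] by measurable
  have "integrable M (\<lambda>w. (norm (Y w))\<^sup>2)"
  proof (rule integrable_norm_sq_bound[OF _ noise_second_moment(1)[OF n j], of _ "dr_ratio * dr_ratio"])
    show "Y \<in> borel_measurable M" unfolding Y_def[abs_def] using n n' j by measurable
    show "AE w in M. norm (Y w) \<le> dr_ratio * dr_ratio * norm (noise n j w)"
      using AE_Proj AE_norm_mult_Proj_le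
    proof eventually_elim
      case (elim w)
      have "norm (Y w) \<le> dr_ratio * norm (noise n j w ** Proj n w)" using elim n' by (simp add: Y_def)
      also have "\<dots> \<le> dr_ratio * (dr_ratio * norm (noise n j w))"
        using elim n dr_ratio_pos by (intro mult_left_mono) auto
      finally show ?case by (simp add: mult.assoc)
    qed
  qed
  note orth = integral_inner_noise_eq_0[OF n' j' Y_meas this]
  have "inner (noise n j w ** Proj n w) (noise n' j' w ** Proj n' w) = inner (noise n' j' w) (Y w)" for w
    unfolding Y_def by (subst inner_matrix_mult_right) (rule inner_commute)
  then show "integrable M (\<lambda>w. inner (noise n j w ** Proj n w) (noise n' j' w ** Proj n' w))"
    and "(\<integral>w. inner (noise n j w ** Proj n w) (noise n' j' w ** Proj n' w) \<partial>M) = 0"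
    using orth by simp_all
qed

lemma norm_noise_avg_sq:
  shows "integrable M (\<lambda>w. (norm (noise_avg w))\<^sup>2)"
    and "(\<integral>w. (norm (noise_avg w))\<^sup>2 \<partial>M) \<le> real J * dr_ratio\<^sup>2 * sigma\<^sup>2 / real N"
proof -
  define I where "I = {..<N} \<times> {..<J}"
  define h where "h p w = noise (fst p) (snd p) w ** Proj (fst p) w" for p w
  have noise_avg_eq: "noise_avg w = (1 / real N) *\<^sub>R (\<Sum>p\<in>I. h p w)" for w
    by (simp add: noise_avg_def I_def h_def sum.cartesian_product case_prod_beta)
  have norm_sq: "(norm (noise_avg w))\<^sup>2 = (1 / real N)\<^sup>2 * (\<Sum>p\<in>I. \<Sum>q\<in>I. inner (h p w) (h q w))" for w
  proof -
    have "(norm (\<Sum>p\<in>I. h p w))\<^sup>2 = (\<Sum>p\<in>I. \<Sum>q\<in>I. inner (h p w) (h q w))"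
      by (simp add: power2_norm_eq_inner inner_sum_left inner_sum_right) (rule sum.swap)
    then show ?thesis unfolding noise_avg_eq norm_scaleR power_mult_distrib power2_abs by simp
  qed
  have int_h: "integrable M (\<lambda>w. (norm (h p w))\<^sup>2)" if "p \<in> I" for p
    using that norm_noise_mult_Proj_sq(1) by (auto simp: I_def h_def)
  have h_meas: "h p \<in> borel_measurable M" if "p \<in> I" for p
    using that unfolding h_def[abs_def] I_def by (cases p) (simp, measurable)
  have int_pq: "integrable M (\<lambda>w. inner (h p w) (h q w))" if "p \<in> I" "q \<in> I" for p q
    using that by (intro integrable_inner h_meas int_h)
  have orth: "(\<integral>w. inner (h p w) (h q w) \<partial>M) = 0" if pq_I: "p \<in> I" "q \<in> I" and "p \<noteq> q" for p q
  proof -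
    obtain n j n' j' where pq: "p = (n, j)" "q = (n', j')" by (cases p, cases q) auto
    have b: "n < N" "j < J" "n' < N" "j' < J" using pq_I pq by (auto simp: I_def)
    consider "n \<noteq> n' \<or> j < j'" | "n' \<noteq> n \<or> j' < j" using \<open>p \<noteq> q\<close> pq by fastforce
    then show ?thesis
    proof cases
      case 1 from integral_inner_noise_cross_eq_0(2)[OF b this] show ?thesis by (simp add: pq h_def)
    next
      case 2 from integral_inner_noise_cross_eq_0(2)[OF b(3,4,1,2) this] show ?thesis
        by (simp add: pq h_def inner_commute)
    qed
  qed
  show "integrable M (\<lambda>w. (norm (noise_avg w))\<^sup>2)"
    unfolding norm_sq using int_pq by (intro integrable_mult_right Bochner_Integration.integrable_sum) auto
  have "(\<integral>w. (norm (noise_avg w))\<^sup>2 \<partial>M) = (1 / real N)\<^sup>2 * (\<Sum>p\<in>I. \<Sum>q\<in>I. (\<integral>w. inner (h p w) (h q w) \<partial>M))"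
    unfolding norm_sq using int_pq by (simp add: Bochner_Integration.integral_sum Bochner_Integration.integrable_sum)
  also have "\<dots> = (1 / real N)\<^sup>2 * (\<Sum>p\<in>I. (\<integral>w. (norm (h p w))\<^sup>2 \<partial>M))"
  proof -
    have "(\<Sum>q\<in>I. (\<integral>w. inner (h p w) (h q w) \<partial>M)) = (\<integral>w. (norm (h p w))\<^sup>2 \<partial>M)" if "p \<in> I" for p
      using that orth by (subst sum.remove[of I p]) (auto simp: I_def power2_norm_eq_inner intro!: sum.neutral)
    then show ?thesis by simp
  qed
  also have "\<dots> \<le> (1 / real N)\<^sup>2 * (\<Sum>p\<in>I. dr_ratio\<^sup>2 * sigma\<^sup>2)"
    by (intro mult_left_mono sum_mono) (auto simp: I_def h_def norm_noise_mult_Proj_sq(2))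
  also have "\<dots> = real J * dr_ratio\<^sup>2 * sigma\<^sup>2 / real N"
    using N by (simp add: I_def card_cartesian_product power2_eq_square field_simps)
  finally show "(\<integral>w. (norm (noise_avg w))\<^sup>2 \<partial>M) \<le> real J * dr_ratio\<^sup>2 * sigma\<^sup>2 / real N" .
qed

text \<open>r \<le> d_n is not assumed but forced: the diagonal entries of P^T P are almost surely at
  most d_n/r and have mean 1.\<close>

lemma dr_ratio_ge_1: "dr_ratio \<ge> 1"
proof -
  have k: "0 < K" using K by simp
  define A where "A w = transpose (P t 0 w) ** P t 0 w" for w
  define i :: 'dn where "i = undefined"
  have int_A: "integrable M A" unfolding A_def[abs_def] by (rule PtP_integrable[OF k])
  have diag: "bounded_linear (\<lambda>X::real^'dn^'dn. X $ i $ i)"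
    by (rule bounded_linear_compose[OF bounded_linear_vec_nth bounded_linear_vec_nth])
  have "(\<integral>w. A w $ i $ i \<partial>M) = (\<integral>w. A w \<partial>M) $ i $ i"
    by (rule integral_bounded_linear[OF diag int_A])
  also have "\<dots> = 1" using P_mean[OF k] by (simp add: A_def mat_def)
  finally have "1 = (\<integral>w. A w $ i $ i \<partial>M)" ..
  also have "\<dots> \<le> (\<integral>w. dr_ratio \<partial>M)"
  proof (rule integral_mono_AE)
    show "integrable M (\<lambda>w. A w $ i $ i)" by (rule integrable_bounded_linear[OF diag int_A])
    show "AE w in M. A w $ i $ i \<le> dr_ratio"
      using AE_P_orth
    proof eventually_elim
      case (elim w)
      then have "P t 0 w ** transpose (P t 0 w) = dr_ratio *\<^sub>R mat 1" using k by simp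
      then show ?case unfolding A_def
        by (intro proj_diag_le transpose_mult_self_square less_imp_le[OF dr_ratio_pos])
          (simp_all add: matrix_transpose_mul)
    qed
  qed simp
  finally show ?thesis by (simp add: prob_space)
qed

lemma step_size_le: "eta * L * real J * dr_ratio \<le> 1 / 16"
proof -
  have pos: "16 * L * real CARD('dn) * real J > 0" using L_pos J by simp
  have "eta * (16 * L * real CARD('dn) * real J) \<le> real CARD('r)"
    using eta_le pos by (simp add: pos_le_divide_eq)
  then show ?thesis unfolding dr_ratio_def by (simp add: field_simps)
qed

lemma avgF_descent:
  "avgF N Fn (W + D) \<le> avgF N Fn W + inner (avgGrad N gradFn W) D + L / 2 * (norm D)\<^sup>2"
proof -
  have "(\<Sum>n<N. Fn n (W + D)) \<le> (\<Sum>n<N. Fn n W + inner (gradFn n W) D + L / 2 * (norm D)\<^sup>2)"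
    by (intro sum_mono descent_lemma[where gr="gradFn n" for n] deriv smooth) auto
  also have "\<dots> = (\<Sum>n<N. Fn n W) + real N * inner (avgGrad N gradFn W) D + real N * (L / 2 * (norm D)\<^sup>2)"
    using N by (simp add: sum.distrib avgGrad_def inner_sum_left)
  finally have "(\<Sum>n<N. Fn n (W + D)) / real N \<le>
      ((\<Sum>n<N. Fn n W) + real N * inner (avgGrad N gradFn W) D + real N * (L / 2 * (norm D)\<^sup>2)) / real N"
    by (rule divide_right_mono) simp
  also have "\<dots> = avgF N Fn W + inner (avgGrad N gradFn W) D + L / 2 * (norm D)\<^sup>2"
    using N by (simp add: avgF_def add_divide_distrib)
  finally show ?thesis by (simp add: avgF_def)
qed

definition first_order_term where
  "first_order_term w = (1 / real N) * (\<Sum>n<N. inner (gradF w) (gradFn n (Wt w) ** Proj n w))"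
definition proj_gradF_term where
  "proj_gradF_term w = (1 / real N) * (\<Sum>n<N. inner (gradF w) (gradF w ** Proj n w))"
definition proj_grad_term where
  "proj_grad_term w = (1 / real N) * (\<Sum>n<N. inner (gradFn n (Wt w)) (gradFn n (Wt w) ** Proj n w))"
text \<open>The expectation of drift_term is the quantity Q^t of the paper.\<close>

definition drift_term where
  "drift_term w = (1 / real N) * (\<Sum>n<N. \<Sum>j<J. (norm (BP n j w))\<^sup>2)"

context
  assumes int_gradF: "integrable M (\<lambda>w. (norm (gradF w))\<^sup>2)"
begin

lemma gradFn_sq_integrable: "n < N \<Longrightarrow> integrable M (\<lambda>w. (norm (gradFn n (Wt w)))\<^sup>2)"
proof (rule Bochner_Integration.integrable_bound)
  assume n: "n < N"
  show "integrable M (\<lambda>w. real N * (vsig\<^sup>2 + (norm (gradF w))\<^sup>2))" using int_gradF by simp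
  show "(\<lambda>w. (norm (gradFn n (Wt w)))\<^sup>2) \<in> borel_measurable M" using n by measurable
  have "(norm (gradFn n (Wt w)))\<^sup>2 \<le> (\<Sum>m<N. (norm (gradFn m (Wt w)))\<^sup>2)" for w
    using n by (intro member_le_sum) auto
  also have "\<dots> w \<le> real N * (vsig\<^sup>2 + (norm (gradF w))\<^sup>2)" for w
    using hetero[of "Wt w"] N by (simp add: gradF_def divide_le_eq mult.commute)
  finally show "AE w in M. norm ((norm (gradFn n (Wt w)))\<^sup>2) \<le> norm (real N * (vsig\<^sup>2 + (norm (gradF w))\<^sup>2))"
    by simp
qed

lemma integral_avg_inner_mult_Proj:
  fixes \<phi> \<psi> :: "nat \<Rightarrow> real^'dn^'dm \<Rightarrow> real^'dn^'dm"
  assumes meas: "\<And>n. n < N \<Longrightarrow> \<phi> n \<in> borel_measurable borel" "\<And>n. n < N \<Longrightarrow> \<psi> n \<in> borel_measurable borel"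
    and int: "\<And>n. n < N \<Longrightarrow> integrable M (\<lambda>w. (norm (\<phi> n (Wt w)))\<^sup>2)"
      "\<And>n. n < N \<Longrightarrow> integrable M (\<lambda>w. (norm (\<psi> n (Wt w)))\<^sup>2)"
  shows "integrable M (\<lambda>w. (1 / real N) * (\<Sum>n<N. inner (\<phi> n (Wt w)) (\<psi> n (Wt w) ** Proj n w)))"
    and "(\<integral>w. (1 / real N) * (\<Sum>n<N. inner (\<phi> n (Wt w)) (\<psi> n (Wt w) ** Proj n w)) \<partial>M)
      = (\<integral>w. (1 / real N) * (\<Sum>n<N. inner (\<phi> n (Wt w)) (\<psi> n (Wt w))) \<partial>M)"
proof -
  note Proj = integral_inner_mult_Proj[OF _ meas(1,2) int(1,2)]
  have int_plain: "integrable M (\<lambda>w. inner (\<phi> n (Wt w)) (\<psi> n (Wt w)))" if n: "n < N" for n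
  proof (rule integrable_inner[OF _ _ int(1)[OF n] int(2)[OF n]])
    show "(\<lambda>w. \<phi> n (Wt w)) \<in> borel_measurable M" using meas(1)[OF n] by measurable
    show "(\<lambda>w. \<psi> n (Wt w)) \<in> borel_measurable M" using meas(2)[OF n] by measurable
  qed
  have "(\<integral>w. (1 / real N) * (\<Sum>n<N. inner (\<phi> n (Wt w)) (\<psi> n (Wt w) ** Proj n w)) \<partial>M)
      = (1 / real N) * (\<Sum>n<N. (\<integral>w. inner (\<phi> n (Wt w)) (\<psi> n (Wt w) ** Proj n w) \<partial>M))"
    unfolding integral_mult_right_zero
    by (subst Bochner_Integration.integral_sum) (use Proj(1) in auto)
  also have "\<dots> = (1 / real N) * (\<Sum>n<N. (\<integral>w. inner (\<phi> n (Wt w)) (\<psi> n (Wt w)) \<partial>M))"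
    using Proj(2) by simp
  also have "\<dots> = (\<integral>w. (1 / real N) * (\<Sum>n<N. inner (\<phi> n (Wt w)) (\<psi> n (Wt w))) \<partial>M)"
    unfolding integral_mult_right_zero
    by (subst Bochner_Integration.integral_sum) (use int_plain in auto)
  finally show "(\<integral>w. (1 / real N) * (\<Sum>n<N. inner (\<phi> n (Wt w)) (\<psi> n (Wt w) ** Proj n w)) \<partial>M)
      = (\<integral>w. (1 / real N) * (\<Sum>n<N. inner (\<phi> n (Wt w)) (\<psi> n (Wt w))) \<partial>M)" .
  show "integrable M (\<lambda>w. (1 / real N) * (\<Sum>n<N. inner (\<phi> n (Wt w)) (\<psi> n (Wt w) ** Proj n w)))"
    using Proj(1) by (intro integrable_mult_right Bochner_Integration.integrable_sum) auto
qed

lemma integral_first_order_term: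
  "integrable M first_order_term" "integral\<^sup>L M first_order_term = (\<integral>w. (norm (gradF w))\<^sup>2 \<partial>M)"
proof -
  note avg = integral_avg_inner_mult_Proj[of "\<lambda>_. avgGrad N gradFn" gradFn]
  show "integrable M first_order_term"
    using avg(1) int_gradF gradFn_sq_integrable by (simp add: first_order_term_def[abs_def] gradF_def)
  have "(1 / real N) * (\<Sum>n<N. inner (gradF w) (gradFn n (Wt w))) = inner (gradF w) (gradF w)" for w
    by (simp add: gradF_def avgGrad_def inner_sum_right)
  then show "integral\<^sup>L M first_order_term = (\<integral>w. (norm (gradF w))\<^sup>2 \<partial>M)"
    using avg(2) int_gradF gradFn_sq_integrable
    by (simp add: first_order_term_def[abs_def] gradF_def power2_norm_eq_inner)
qed

lemma integral_proj_gradF_term: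
  "integrable M proj_gradF_term" "integral\<^sup>L M proj_gradF_term = (\<integral>w. (norm (gradF w))\<^sup>2 \<partial>M)"
proof -
  note avg = integral_avg_inner_mult_Proj[of "\<lambda>_. avgGrad N gradFn" "\<lambda>_. avgGrad N gradFn"]
  show "integrable M proj_gradF_term"
    using avg(1) int_gradF by (simp add: proj_gradF_term_def[abs_def] gradF_def)
  show "integral\<^sup>L M proj_gradF_term = (\<integral>w. (norm (gradF w))\<^sup>2 \<partial>M)"
    using avg(2) int_gradF N by (simp add: proj_gradF_term_def[abs_def] gradF_def power2_norm_eq_inner)
qed

lemma integral_proj_grad_term:
  "integrable M proj_grad_term" "integral\<^sup>L M proj_grad_term \<le> vsig\<^sup>2 + (\<integral>w. (norm (gradF w))\<^sup>2 \<partial>M)"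
proof -
  note avg = integral_avg_inner_mult_Proj[of gradFn gradFn]
  show "integrable M proj_grad_term"
    using avg(1) gradFn_sq_integrable by (simp add: proj_grad_term_def[abs_def])
  have "integral\<^sup>L M proj_grad_term = (\<integral>w. (\<Sum>n<N. (norm (gradFn n (Wt w)))\<^sup>2) / real N \<partial>M)"
    using avg(2) gradFn_sq_integrable by (simp add: proj_grad_term_def[abs_def] power2_norm_eq_inner)
  also have "\<dots> \<le> (\<integral>w. vsig\<^sup>2 + (norm (gradF w))\<^sup>2 \<partial>M)"
  proof (rule integral_mono)
    show "integrable M (\<lambda>w. (\<Sum>n<N. (norm (gradFn n (Wt w)))\<^sup>2) / real N)"
      using gradFn_sq_integrable by (intro integrable_divide Bochner_Integration.integrable_sum) auto
  qed (use int_gradF hetero in \<open>simp_all add: gradF_def\<close>)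
  also have "\<dots> = vsig\<^sup>2 + (\<integral>w. (norm (gradF w))\<^sup>2 \<partial>M)"
    using int_gradF by (simp add: prob_space)
  finally show "integral\<^sup>L M proj_grad_term \<le> vsig\<^sup>2 + (\<integral>w. (norm (gradF w))\<^sup>2 \<partial>M)" .
qed

lemma integral_inner_gradF_noise_avg:
  "integrable M (\<lambda>w. inner (gradF w) (noise_avg w))" "(\<integral>w. inner (gradF w) (noise_avg w) \<partial>M) = 0"
proof -
  have "integrable M (\<lambda>w. inner (gradF w) (noise n j w ** Proj n w))
      \<and> (\<integral>w. inner (gradF w) (noise n j w ** Proj n w) \<partial>M) = 0" if n: "n < N" and j: "j < J" for n j
  proof -
    define Y where "Y w = gradF w ** transpose (Proj n w)" for w
    have Y_meas: "Y \<in> borel_measurable (sigma_without (Inr (Inr (t, n, j))))"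
      unfolding Y_def[abs_def]
      using measurable_sigma_without_xi(4)[OF n j] measurable_sigma_without_xi(1)[OF n j n] by measurable
    have "integrable M (\<lambda>w. (norm (Y w))\<^sup>2)"
    proof (rule integrable_norm_sq_bound[OF _ int_gradF, of _ dr_ratio])
      show "Y \<in> borel_measurable M" unfolding Y_def[abs_def] using n by measurable
      show "AE w in M. norm (Y w) \<le> dr_ratio * norm (gradF w)"
        using AE_Proj AE_norm_mult_Proj_le by eventually_elim (use n in \<open>simp add: Y_def\<close>)
    qed
    note orth = integral_inner_noise_eq_0[OF n j Y_meas this]
    have "inner (gradF w) (noise n j w ** Proj n w) = inner (noise n j w) (Y w)" for w
      unfolding Y_def by (subst inner_matrix_mult_right) (rule inner_commute)
    then show ?thesis using orth by simp
  qed
  then have int: "integrable M (\<lambda>w. inner (gradF w) (noise n j w ** Proj n w))"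
    and zero: "(\<integral>w. inner (gradF w) (noise n j w ** Proj n w) \<partial>M) = 0"
    if "n < N" "j < J" for n j
    using that by auto
  have eq: "inner (gradF w) (noise_avg w) = (1 / real N) * (\<Sum>n<N. \<Sum>j<J. inner (gradF w) (noise n j w ** Proj n w))" for w
    by (simp add: noise_avg_def inner_sum_right)
  show "integrable M (\<lambda>w. inner (gradF w) (noise_avg w))"
    unfolding eq using int by (intro integrable_mult_right Bochner_Integration.integrable_sum) auto
  show "(\<integral>w. inner (gradF w) (noise_avg w) \<partial>M) = 0"
    unfolding eq integral_mult_right_zero using int zero by (simp add: integral_double_sum)
qed

end

lemma AE_round_descent:
  "AE w in M. avgF N Fn (Wrv g eta N J W0 P kk xi (Suc t) w) \<le> avgF N Fn (Wt w)
      - eta * real J * first_order_term w + eta * real J / 2 * proj_gradF_term w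
      + (eta * dr_ratio * L\<^sup>2 / 2 + 2 * L^3 * eta\<^sup>2 * real J * dr_ratio\<^sup>2) * drift_term w
      - eta * inner (gradF w) (noise_avg w)
      + 2 * L * eta\<^sup>2 * (real J)\<^sup>2 * dr_ratio * proj_grad_term w + L * eta\<^sup>2 * (norm (noise_avg w))\<^sup>2"
  using AE_Proj
proof eventually_elim
  case (elim w)
  define D where "D = Wrv g eta N J W0 P kk xi (Suc t) w - Wt w"
  have "avgF N Fn (Wrv g eta N J W0 P kk xi (Suc t) w) \<le> avgF N Fn (Wt w) + inner (gradF w) D + L / 2 * (norm D)\<^sup>2"
    using avgF_descent[of "Wt w" D] by (simp add: D_def gradF_def)
  moreover have "inner (gradF w) D + L / 2 * (norm D)\<^sup>2 \<le>
      - eta * real J * first_order_term w + eta * real J / 2 * proj_gradF_term w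
      + (eta * dr_ratio * L\<^sup>2 / 2 + 2 * L^3 * eta\<^sup>2 * real J * dr_ratio\<^sup>2) * drift_term w
      - eta * inner (gradF w) (noise_avg w)
      + 2 * L * eta\<^sup>2 * (real J)\<^sup>2 * dr_ratio * proj_grad_term w + L * eta\<^sup>2 * (norm (noise_avg w))\<^sup>2"
    unfolding first_order_term_def proj_gradF_term_def drift_term_def proj_grad_term_def
  proof (rule round_increment_bound[OF N dr_ratio_pos _ _ eta_pos less_imp_le[OF L_pos]])
    show "\<And>n j. n < N \<Longrightarrow> j < J \<Longrightarrow> norm (gradFn n (Wloc n j w) - gradFn n (Wt w)) \<le> L * norm (BP n j w)"
      using smooth[of _ "Wloc _ _ w" "Wt w"] by (simp add: Wloc_def)
    show "noise_avg w = (1 / real N) *\<^sub>R (\<Sum>n<N. \<Sum>j<J. noise n j w ** Proj n w)"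
      by (rule noise_avg_def)
    show "D = (- eta / real N) *\<^sub>R (\<Sum>n<N. \<Sum>j<J. (gradFn n (Wloc n j w) + noise n j w) ** Proj n w)"
      unfolding D_def Wrv_Suc_eq by simp
  qed (use elim in auto)
  ultimately show ?case by linarith
qed

lemma expected_round_descent:
  assumes int_F: "integrable M (\<lambda>w. avgF N Fn (Wt w))"
    and int_F': "integrable M (\<lambda>w. avgF N Fn (Wrv g eta N J W0 P kk xi (Suc t) w))"
    and int_gradF: "integrable M (\<lambda>w. (norm (gradF w))\<^sup>2)"
    and int_BP: "\<And>n j. n < N \<Longrightarrow> j < J \<Longrightarrow> integrable M (\<lambda>w. (norm (BP n j w))\<^sup>2)"
  shows "(\<integral>w. avgF N Fn (Wrv g eta N J W0 P kk xi (Suc t) w) \<partial>M)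
    \<le> (\<integral>w. avgF N Fn (Wt w) \<partial>M) + 2 * L * eta\<^sup>2 * (real J)\<^sup>2 * dr_ratio * vsig\<^sup>2
      + eta * dr_ratio\<^sup>2 * L\<^sup>2 * ((1 / real N) * (\<Sum>n<N. \<Sum>j<J. (\<integral>w. (norm (BP n j w))\<^sup>2 \<partial>M)))
      - 3 * real J * eta / 8 * (\<integral>w. (norm (gradF w))\<^sup>2 \<partial>M)
      + L * real J * eta\<^sup>2 * dr_ratio\<^sup>2 * sigma\<^sup>2 / real N"
proof -
  let ?\<kappa> = "eta * dr_ratio * L\<^sup>2 / 2 + 2 * L^3 * eta\<^sup>2 * real J * dr_ratio\<^sup>2"
  let ?EG = "\<integral>w. (norm (gradF w))\<^sup>2 \<partial>M"
  let ?Q = "(1 / real N) * (\<Sum>n<N. \<Sum>j<J. (\<integral>w. (norm (BP n j w))\<^sup>2 \<partial>M))"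
  have int_drift: "integrable M drift_term"
    unfolding drift_term_def[abs_def]
    using int_BP by (intro integrable_mult_right Bochner_Integration.integrable_sum) auto
  have drift: "integral\<^sup>L M drift_term = (1 / real N) * (\<Sum>n<N. \<Sum>j<J. (\<integral>w. (norm (BP n j w))\<^sup>2 \<partial>M))"
    unfolding drift_term_def[abs_def] integral_mult_right_zero using int_BP by (simp add: integral_double_sum)
  note first = integral_first_order_term[OF int_gradF] and proj_gradF = integral_proj_gradF_term[OF int_gradF]
    and proj_grad = integral_proj_grad_term[OF int_gradF] and cross = integral_inner_gradF_noise_avg[OF int_gradF]
    and noise = norm_noise_avg_sq
  have "(\<integral>w. avgF N Fn (Wrv g eta N J W0 P kk xi (Suc t) w) \<partial>M)
      \<le> (\<integral>w. avgF N Fn (Wt w)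
        - eta * real J * first_order_term w + eta * real J / 2 * proj_gradF_term w + ?\<kappa> * drift_term w
        - eta * inner (gradF w) (noise_avg w)
        + 2 * L * eta\<^sup>2 * (real J)\<^sup>2 * dr_ratio * proj_grad_term w + L * eta\<^sup>2 * (norm (noise_avg w))\<^sup>2 \<partial>M)"
    by (rule integral_mono_AE[OF int_F' _ AE_round_descent])
      (use int_F first(1) proj_gradF(1) int_drift cross(1) proj_grad(1) noise(1) in simp)
  also have "\<dots> = (\<integral>w. avgF N Fn (Wt w) \<partial>M)
        - eta * real J * integral\<^sup>L M first_order_term + eta * real J / 2 * integral\<^sup>L M proj_gradF_term
        + ?\<kappa> * integral\<^sup>L M drift_term - eta * (\<integral>w. inner (gradF w) (noise_avg w) \<partial>M)
        + 2 * L * eta\<^sup>2 * (real J)\<^sup>2 * dr_ratio * integral\<^sup>L M proj_grad_term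
        + L * eta\<^sup>2 * (\<integral>w. (norm (noise_avg w))\<^sup>2 \<partial>M)"
    using int_F first(1) proj_gradF(1) int_drift cross(1) proj_grad(1) noise(1)
    by (simp add: Bochner_Integration.integral_add Bochner_Integration.integral_diff)
  finally have "(\<integral>w. avgF N Fn (Wrv g eta N J W0 P kk xi (Suc t) w) \<partial>M)
      \<le> (\<integral>w. avgF N Fn (Wt w) \<partial>M) - eta * real J * ?EG + eta * real J / 2 * ?EG + ?\<kappa> * ?Q
        + 2 * L * eta\<^sup>2 * (real J)\<^sup>2 * dr_ratio * integral\<^sup>L M proj_grad_term
        + L * eta\<^sup>2 * (\<integral>w. (norm (noise_avg w))\<^sup>2 \<partial>M)"
    unfolding first(2) proj_gradF(2) cross(2) drift by simp
  moreover have "?Q \<ge> 0" by (intro mult_nonneg_nonneg sum_nonneg integral_nonneg_AE) auto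
  ultimately show ?thesis
    by (intro descent_constants_le[OF _ proj_grad(2) noise(2)])
      (use dr_ratio_ge_1 eta_pos L_pos J step_size_le in auto)
qed

end

theorem lemma1:
  fixes M :: "'w measure" and S :: "'a measure"
    and Fn :: "nat \<Rightarrow> real^'dn^'dm \<Rightarrow> real"
    and gradFn :: "nat \<Rightarrow> real^'dn^'dm \<Rightarrow> real^'dn^'dm"
    and g :: "nat \<Rightarrow> real^'dn^'dm \<Rightarrow> 'a \<Rightarrow> real^'dn^'dm"
    and P :: "nat \<Rightarrow> nat \<Rightarrow> 'w \<Rightarrow> real^'dn^'r"
    and kk :: "nat \<Rightarrow> nat \<Rightarrow> 'w \<Rightarrow> nat"
    and xi :: "nat \<Rightarrow> nat \<Rightarrow> nat \<Rightarrow> 'w \<Rightarrow> 'a"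
    and W0 :: "real^'dn^'dm"
    and N K J t :: nat
    and L eta sigma vsig :: real
  assumes M: "prob_space M"
    and N: "N \<ge> 1" and K: "K \<ge> 1" and J: "J \<ge> 1"
    and deriv: "\<And>n W. n < N \<Longrightarrow> (Fn n has_derivative (\<lambda>H. gradFn n W \<bullet> H)) (at W)"
    and smooth: "\<And>n W1 W2. n < N \<Longrightarrow> norm (gradFn n W1 - gradFn n W2) \<le> L * norm (W1 - W2)"
    and g_meas: "\<And>n. n < N \<Longrightarrow> (\<lambda>p. g n (fst p) (snd p)) \<in> borel_measurable (borel \<Otimes>\<^sub>M S)"
    and xi_meas: "\<And>t n j. n < N \<Longrightarrow> j < J \<Longrightarrow> xi t n j \<in> measurable M S"
    and unbiased: "\<And>t n j W. n < N \<Longrightarrow> j < J \<Longrightarrow>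
        integrable M (\<lambda>w. g n W (xi t n j w)) \<and> (\<integral>w. g n W (xi t n j w) \<partial>M) = gradFn n W"
    and variance: "\<And>t n j W. n < N \<Longrightarrow> j < J \<Longrightarrow>
        integrable M (\<lambda>w. (norm (g n W (xi t n j w) - gradFn n W))\<^sup>2) \<and>
        (\<integral>w. (norm (g n W (xi t n j w) - gradFn n W))\<^sup>2 \<partial>M) \<le> sigma\<^sup>2"
    and vsig: "vsig \<ge> 0"
    and hetero: "\<And>W. (\<Sum>n<N. (norm (gradFn n W))\<^sup>2) / real N \<le> vsig\<^sup>2 + (norm (avgGrad N gradFn W))\<^sup>2"
    and P_meas: "\<And>t k. k < K \<Longrightarrow> P t k \<in> borel_measurable M"
    and P_orth: "\<And>t k. k < K \<Longrightarrow>
        AE w in M. P t k w ** transpose (P t k w) = (real CARD('dn) / real CARD('r)) *\<^sub>R mat 1"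
    and P_mean: "\<And>t k. k < K \<Longrightarrow> (\<integral>w. transpose (P t k w) ** P t k w \<partial>M) = mat 1"
    and kk_meas: "\<And>t n. n < N \<Longrightarrow> kk t n \<in> measurable M (count_space UNIV)"
    and kk_range: "\<And>t n w. n < N \<Longrightarrow> w \<in> space M \<Longrightarrow> kk t n w < K"
    and kk_unif: "\<And>t n k. n < N \<Longrightarrow> k < K \<Longrightarrow> measure M {w \<in> space M. kk t n w = k} = 1 / real K"
    and indep: "prob_space.indep_sets M (fed_events M S P kk xi) (fed_index K N J)"
    and eta_pos: "0 < eta"
    and eta_le: "eta \<le> real CARD('r) / (16 * L * real CARD('dn) * real J)"
    and int_F: "integrable M (\<lambda>w. avgF N Fn (Wrv g eta N J W0 P kk xi t w))"
    and int_F': "integrable M (\<lambda>w. avgF N Fn (Wrv g eta N J W0 P kk xi (Suc t) w))"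
    and int_G: "integrable M (\<lambda>w. (norm (avgGrad N gradFn (Wrv g eta N J W0 P kk xi t w)))\<^sup>2)"
    and int_BP: "\<And>n j. n < N \<Longrightarrow> j < J \<Longrightarrow>
        integrable M (\<lambda>w. (norm (Brv g eta N J W0 P kk xi t n j w ** P t (kk t n w) w))\<^sup>2)"
  shows "(\<integral>w. avgF N Fn (Wrv g eta N J W0 P kk xi (Suc t) w) \<partial>M)
    \<le> (\<integral>w. avgF N Fn (Wrv g eta N J W0 P kk xi t w) \<partial>M)
       + 2 * L * real CARD('dn) * (real J)\<^sup>2 * eta\<^sup>2 / real CARD('r) * vsig\<^sup>2
       + eta * (real CARD('dn))\<^sup>2 * L\<^sup>2 / (real CARD('r))\<^sup>2
           * ((1 / real N) * (\<Sum>n<N. \<Sum>j<J.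
                (\<integral>w. (norm (Brv g eta N J W0 P kk xi t n j w ** P t (kk t n w) w))\<^sup>2 \<partial>M)))
       - 3 * real J * eta / 8
           * (\<integral>w. (norm (avgGrad N gradFn (Wrv g eta N J W0 P kk xi t w)))\<^sup>2 \<partial>M)
       + L * real J * eta\<^sup>2 * (real CARD('dn))\<^sup>2 * sigma\<^sup>2 / (real N * (real CARD('r))\<^sup>2)"
proof -
  interpret fedkrso_round M S Fn gradFn g P kk xi W0 N K J t L eta sigma vsig
    by (rule fedkrso_round.intro) (fact M N K J deriv smooth g_meas xi_meas unbiased variance hetero
        P_meas P_orth P_mean kk_meas kk_range indep eta_pos eta_le)+
  have "(\<integral>w. avgF N Fn (Wrv g eta N J W0 P kk xi (Suc t) w) \<partial>M)
    \<le> (\<integral>w. avgF N Fn (Wt w) \<partial>M) + 2 * L * eta\<^sup>2 * (real J)\<^sup>2 * dr_ratio * vsig\<^sup>2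
      + eta * dr_ratio\<^sup>2 * L\<^sup>2 * ((1 / real N) * (\<Sum>n<N. \<Sum>j<J. (\<integral>w. (norm (BP n j w))\<^sup>2 \<partial>M)))
      - 3 * real J * eta / 8 * (\<integral>w. (norm (gradF w))\<^sup>2 \<partial>M)
      + L * real J * eta\<^sup>2 * dr_ratio\<^sup>2 * sigma\<^sup>2 / real N"
    by (rule expected_round_descent) (use int_F int_F' int_G int_BP in \<open>simp_all add: Wt_def gradF_def BP_def Pn_def\<close>)
  then show ?thesis
    by (simp add: Wt_def gradF_def BP_def Pn_def dr_ratio_def power_divide field_simps)
qed

end
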